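(* Let $K$ be a maximal compact subgroup of a complex reductive group $G$, fix an $\mathrm{Ad}_K$-invariant Euclidean inner product $\langle\cdot,\cdot\rangle$ on $i\mathfrak k$, and let $p_{i\mathfrak k},p_{\mathfrak k}$ be the projections for $\mathfrak g=\mathfrak k\oplus i\mathfrak k$. Let $s,\dot s\in i\mathfrak k$ and write $\dot s=\lambda+[k,s]$ with $\lambda\in i z_{\mathfrak k}(s)$, $k\in z_{\mathfrak k}(s)^\perp\subset\mathfrak k$. Put $\sigma:=(d_s\exp)(\dot s)\,e^{-s}\in\mathfrak g$ (right translation to $\mathfrak g$ of the differential of $\exp:\mathfrak g\to G$ at $s$ applied to $\dot s$). Then: (1) $\sigma=\lambda+(k-\mathrm{Ad}_{e^s}k)$; (2) $\langle\dot s,p_{i\mathfrak k}(\sigma)\rangle\ge\|\dot s\|^2$; (3) $\langle[p_{\mathfrak k}(\sigma),s],p_{i\mathfrak k}(\sigma)\rangle\le0$, with equality if and only if $\dot s\in i z_{\mathfrak k}(s)$.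
   Context: $z_{\mathfrak k}(s)=\{u\in\mathfrak k:[u,s]=0\}$ and $z_{\mathfrak k}(s)^\perp$ is its orthogonal complement in $\mathfrak k$ (with respect to the inner product transported by multiplication by $i$). Every $\dot s\in i\mathfrak k$ admits such a decomposition since $i\mathfrak k=i z_{\mathfrak k}(s)\oplus[\mathfrak k,s]$. *)

theory Defs
  imports "HOL-Analysis.Analysis"
begin

type_synonym 'n cmat = "complex^'n^'n"

fun mpow :: "'n::finite cmat \<Rightarrow> nat \<Rightarrow> 'n cmat" where
  "mpow A 0 = mat 1"
| "mpow A (Suc k) = A ** mpow A k"

definition mexp :: "'n::finite cmat \<Rightarrow> 'n cmat" where
  "mexp A = (\<Sum>k. (1 / fact k) *\<^sub>R mpow A k)"

definition cscale :: "complex \<Rightarrow> 'n::finite cmat \<Rightarrow> 'n cmat" where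
  "cscale c A = (\<chi> i j. c * A $ i $ j)"

definition adj :: "'n::finite cmat \<Rightarrow> 'n cmat" where
  "adj A = (\<chi> i j. cnj (A $ j $ i))"

definition brk :: "'n::finite cmat \<Rightarrow> 'n cmat \<Rightarrow> 'n cmat" where
  "brk X Y = X ** Y - Y ** X"

inductive_set polyfun :: "('n::finite cmat \<Rightarrow> complex) set" where
  pconst: "(\<lambda>A. c) \<in> polyfun"
| pcoord: "(\<lambda>A. A $ i $ j) \<in> polyfun"
| padd: "p \<in> polyfun \<Longrightarrow> q \<in> polyfun \<Longrightarrow> (\<lambda>A. p A + q A) \<in> polyfun"
| pmult: "p \<in> polyfun \<Longrightarrow> q \<in> polyfun \<Longrightarrow> (\<lambda>A. p A * q A) \<in> polyfun"

definition algebraic_subgroup :: "'n::finite cmat set \<Rightarrow> bool" where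
  "algebraic_subgroup G \<longleftrightarrow>
     mat 1 \<in> G \<and> (\<forall>A\<in>G. \<forall>B\<in>G. A ** B \<in> G) \<and> (\<forall>A\<in>G. matrix_inv A \<in> G) \<and>
     (\<exists>P \<subseteq> polyfun. G = {A. invertible A \<and> (\<forall>p\<in>P. p A = 0)})"

text \<open>Complex reductive group, realized as a self-adjoint algebraic subgroup of GL_n(C).\<close>
definition complex_reductive :: "'n::finite cmat set \<Rightarrow> bool" where
  "complex_reductive G \<longleftrightarrow> algebraic_subgroup G \<and> (\<forall>A\<in>G. adj A \<in> G)"

definition maxK :: "'n::finite cmat set \<Rightarrow> 'n cmat set" where
  "maxK G = {A \<in> G. A ** adj A = mat 1}"

definition lie_alg :: "'n::finite cmat set \<Rightarrow> 'n cmat set" where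
  "lie_alg H = {X. \<forall>t::real. mexp (t *\<^sub>R X) \<in> H}"

definition kk :: "'n::finite cmat set \<Rightarrow> 'n cmat set" where
  "kk G = lie_alg (maxK G)"

definition ik :: "'n::finite cmat set \<Rightarrow> 'n cmat set" where
  "ik G = cscale \<i> ` kk G"

definition p_k :: "'n::finite cmat set \<Rightarrow> 'n cmat \<Rightarrow> 'n cmat" where
  "p_k G X = (THE u. u \<in> kk G \<and> X - u \<in> ik G)"

definition p_ik :: "'n::finite cmat set \<Rightarrow> 'n cmat \<Rightarrow> 'n cmat" where
  "p_ik G X = (THE v. v \<in> ik G \<and> X - v \<in> kk G)"

definition euclid_ip_on :: "'n::finite cmat set \<Rightarrow> ('n cmat \<Rightarrow> 'n cmat \<Rightarrow> real) \<Rightarrow> bool" where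
  "euclid_ip_on V ip \<longleftrightarrow>
     (\<forall>x\<in>V. \<forall>y\<in>V. ip x y = ip y x) \<and>
     (\<forall>x\<in>V. \<forall>y\<in>V. \<forall>z\<in>V. ip (x + y) z = ip x z + ip y z) \<and>
     (\<forall>x\<in>V. \<forall>y\<in>V. \<forall>c::real. ip (c *\<^sub>R x) y = c * ip x y) \<and>
     (\<forall>x\<in>V. x \<noteq> 0 \<longrightarrow> ip x x > 0)"

text \<open>Centralizer of s in k and its orthogonal complement in k (inner product transported by i).\<close>
definition zk :: "'n::finite cmat set \<Rightarrow> 'n cmat \<Rightarrow> 'n cmat set" where
  "zk G s = {u \<in> kk G. brk u s = 0}"

definition zk_perp :: "'n::finite cmat set \<Rightarrow> ('n cmat \<Rightarrow> 'n cmat \<Rightarrow> real) \<Rightarrow> 'n cmat \<Rightarrow> 'n cmat set" where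
  "zk_perp G ip s = {u \<in> kk G. \<forall>v \<in> zk G s. ip (cscale \<i> u) (cscale \<i> v) = 0}"

end

theory Submission
  imports Defs
begin

text \<open>
  Write \<open>s = i s\<^sub>0\<close> with \<open>s\<^sub>0 \<in> k\<close>. Differentiating \<open>exp\<close> at \<open>s\<close> along \<open>\<lambda> + [k, s]\<close>,
  where \<open>\<lambda>\<close> commutes with \<open>s\<close>, gives \<open>\<sigma> = \<lambda> + k - Ad\<^bsub>e\<^sup>s\<^esub> k\<close>, and
  \<open>Ad\<^bsub>e\<^sup>s\<^esub> k = \<Sum>\<^sub>n ad\<^sub>s\<^sup>n k / n!\<close>. Since \<open>ad\<^sub>s\<close> exchanges \<open>k\<close> and \<open>i k\<close>, the even terms
  of this series make up \<open>p\<^sub>k \<sigma>\<close> and the odd ones \<open>p\<^sub>i\<^sub>k \<sigma>\<close>. Invariance of the inner product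
  makes \<open>ad\<^sub>s\<^sub>0\<close> skew on \<open>i k\<close>, so \<open>ad\<^sub>s\<^sup>2 = - ad\<^sub>s\<^sub>0\<^sup>2\<close> is positive semidefinite there:
  all products \<open>\<langle>ad\<^sub>s\<^sup>p k, ad\<^sub>s\<^sup>q k\<rangle>\<close> with \<open>p, q\<close> odd are nonnegative, while \<open>\<lambda>\<close> is
  orthogonal to the image of \<open>ad\<^sub>s\<close>. Expanding the two inner products of the statement in
  these series gives both inequalities, and equality in the second one forces
  \<open>\<langle>ad\<^sub>s\<^sup>3 k, ad\<^sub>s k\<rangle> = |[s\<^sub>0, [s, k]]|\<^sup>2 = 0\<close>, which says that \<open>[s, \<lambda> + [k, s]] = 0\<close>.
\<close>

section \<open>The exponential in a Banach algebra\<close>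

definition Dpow :: "'a::real_normed_algebra_1 \<Rightarrow> nat \<Rightarrow> 'a \<Rightarrow> 'a" where
  "Dpow x n h = (\<Sum>j<n. x^j * h * x^(n - Suc j))"

lemma Dpow_0 [simp]: "Dpow x 0 h = 0"
  by (simp add: Dpow_def)

lemma Dpow_Suc: "Dpow x (Suc n) h = h * x^n + x * Dpow x n h"
proof -
  have "Dpow x (Suc n) h = x^0 * h * x^(Suc n - Suc 0) + (\<Sum>j<n. x^(Suc j) * h * x^(Suc n - Suc (Suc j)))"
    unfolding Dpow_def by (rule sum.lessThan_Suc_shift)
  then show ?thesis
    by (simp add: Dpow_def sum_distrib_left mult.assoc)
qed

lemma has_derivative_power_Dpow:
  "((\<lambda>y. y^n) has_derivative Dpow x n) (at x within S)"
proof (induction n)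
  case 0
  then show ?case by (simp add: fun_eq_iff[of "Dpow x 0"])
next
  case (Suc n)
  have "(\<lambda>h. x * Dpow x n h + h * x^n) = Dpow x (Suc n)"
    by (simp add: fun_eq_iff Dpow_Suc add.commute)
  with has_derivative_mult[OF has_derivative_ident Suc.IH] show ?case
    by simp
qed

lemma norm_power_le_power:
  fixes x :: "'a::real_normed_algebra_1"
  assumes "norm x \<le> R"
  shows "norm (x^n) \<le> R^n"
  using norm_power_ineq[of x n] power_mono[OF assms norm_ge_zero, of n] by linarith

lemma norm_Dpow_le:
  fixes x :: "'a::real_normed_algebra_1"
  assumes x: "norm x \<le> R"
  shows "norm (Dpow x (Suc n) h) \<le> real (Suc n) * R^n * norm h"
proof -
  have R: "0 \<le> R" using x norm_ge_zero order_trans by blast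
  have "norm (x^j * h * x^(Suc n - Suc j)) \<le> R^n * norm h" if "j < Suc n" for j
  proof -
    have "norm (x^j * h * x^(Suc n - Suc j)) \<le> norm (x^j) * norm h * norm (x^(Suc n - Suc j))"
      by (rule order_trans[OF norm_mult_ineq mult_right_mono[OF norm_mult_ineq norm_ge_zero]])
    also have "\<dots> \<le> R^j * norm h * R^(Suc n - Suc j)"
      by (intro mult_mono norm_power_le_power x) (simp_all add: R)
    also have "\<dots> = R^n * norm h"
      using that by (simp add: power_add[symmetric] mult_ac)
    finally show ?thesis .
  qed
  then have "norm (Dpow x (Suc n) h) \<le> (\<Sum>j<Suc n. R^n * norm h)"
    unfolding Dpow_def by (intro order_trans[OF norm_sum] sum_mono) simp
  then show ?thesis by simp
qed

lemma norm_Dpow_Suc_div_fact_le: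
  fixes x :: "'a::real_normed_algebra_1"
  assumes "norm x \<le> R"
  shows "norm (Dpow x (Suc n) h /\<^sub>R fact (Suc n)) \<le> R^n / fact n * norm h"
proof -
  have "norm (Dpow x (Suc n) h /\<^sub>R fact (Suc n)) = norm (Dpow x (Suc n) h) / fact (Suc n)"
    by (simp add: field_simps)
  also have "\<dots> \<le> real (Suc n) * R^n * norm h / fact (Suc n)"
    by (intro divide_right_mono norm_Dpow_le assms) simp
  also have "\<dots> = R^n / fact n * norm h"
    unfolding fact_Suc of_nat_mult by (simp add: field_simps del: of_nat_Suc)
  finally show ?thesis .
qed

lemma summable_exp_real: "summable (\<lambda>n. (R::real)^n / fact n)"
  using summable_exp[of R] by (simp add: field_simps)

lemma summable_Dpow_div_fact:
  fixes x :: "'a::{real_normed_algebra_1,banach}"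
  shows "summable (\<lambda>n. Dpow x n h /\<^sub>R fact n)"
proof -
  have "summable (\<lambda>n. Dpow x (Suc n) h /\<^sub>R fact (Suc n))"
    by (rule summable_comparison_test'[OF summable_mult2[OF summable_exp_real]])
       (rule norm_Dpow_Suc_div_fact_le, rule order_refl)
  then show ?thesis
    by (rule summable_Suc_iff[THEN iffD1])
qed

definition Dexp :: "'a::{real_normed_algebra_1,banach} \<Rightarrow> 'a \<Rightarrow> 'a" where
  "Dexp x h = (\<Sum>n. Dpow x n h /\<^sub>R fact n)"

lemma norm_partial_sum_sub_Dexp_le:
  fixes y :: "'a::{real_normed_algebra_1,banach}"
  assumes y: "norm y \<le> R"
  shows "norm ((\<Sum>i<Suc m. Dpow y i h /\<^sub>R fact i) - Dexp y h) \<le> (\<Sum>i. R^(i + m) / fact (i + m)) * norm h"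
proof -
  define f where "f i = Dpow y i h /\<^sub>R fact i" for i
  have sR: "summable (\<lambda>i. R^(i + m) / fact (i + m))"
    by (rule summable_iff_shift[where f="\<lambda>i. R^i / fact i", THEN iffD2, OF summable_exp_real])
  have f: "norm (f (i + Suc m)) \<le> R^(i + m) / fact (i + m) * norm h" for i
    using norm_Dpow_Suc_div_fact_le[OF y, of "i + m" h] by (simp add: f_def)
  have "Dexp y h = (\<Sum>i. f (i + Suc m)) + (\<Sum>i<Suc m. f i)"
    unfolding Dexp_def f_def by (rule suminf_split_initial_segment[OF summable_Dpow_div_fact])
  then have "norm ((\<Sum>i<Suc m. f i) - Dexp y h) = norm (\<Sum>i. f (i + Suc m))"
    by (simp add: norm_minus_commute)
  also have "\<dots> \<le> (\<Sum>i. R^(i + m) / fact (i + m) * norm h)"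
    by (rule norm_suminf_le[OF f summable_mult2[OF sR]])
  also have "\<dots> = (\<Sum>i. R^(i + m) / fact (i + m)) * norm h"
    by (rule suminf_mult2[OF sR, symmetric])
  finally show ?thesis
    by (simp add: f_def)
qed

lemma Dexp_partial_sums_uniformly:
  fixes R e :: real
  assumes "0 < e"
  shows "\<forall>\<^sub>F n in sequentially. \<forall>y\<in>cball (0::'a::{real_normed_algebra_1,banach}) R.
           \<forall>h. norm ((\<Sum>i<n. Dpow y i h /\<^sub>R fact i) - Dexp y h) \<le> e * norm h"
proof -
  obtain N where N: "\<And>m. m \<ge> N \<Longrightarrow> norm (\<Sum>i. R^(i + m) / fact (i + m)) < e"
    using suminf_exist_split[OF assms summable_exp_real] by blast
  have bound: "norm ((\<Sum>i<Suc m. Dpow y i h /\<^sub>R fact i) - Dexp y h) \<le> e * norm h"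
    if m: "N \<le> m" and y: "norm y \<le> R" for m and y h :: 'a
  proof -
    have "(\<Sum>i. R^(i + m) / fact (i + m)) \<le> e"
      using N[OF m] by (simp add: abs_less_iff)
    from mult_right_mono[OF this norm_ge_zero]
    show ?thesis
      by (rule order_trans[OF norm_partial_sum_sub_Dexp_le[OF y]])
  qed
  show ?thesis
  proof (rule eventually_sequentiallyI[of "Suc N"])
    fix n assume "Suc N \<le> n"
    then obtain m where n: "n = Suc m" and m: "N \<le> m"
      by (cases n) auto
    show "\<forall>y\<in>cball (0::'a) R. \<forall>h. norm ((\<Sum>i<n. Dpow y i h /\<^sub>R fact i) - Dexp y h) \<le> e * norm h"
    proof (intro ballI allI)
      fix y h :: 'a assume "y \<in> cball 0 R"
      then show "norm ((\<Sum>i<n. Dpow y i h /\<^sub>R fact i) - Dexp y h) \<le> e * norm h"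
        unfolding n using bound[OF m, of y h] by simp
    qed
  qed
qed

lemma has_derivative_exp_Dexp:
  fixes x :: "'a::{real_normed_algebra_1,banach}"
  shows "(exp has_derivative Dexp x) (at x)"
proof -
  define S where "S = ball (0::'a) (norm x + 1)"
  have x: "x \<in> S" and S: "open S" by (simp_all add: S_def)
  have "\<exists>g. \<forall>y\<in>S. (\<lambda>n. y^n /\<^sub>R fact n) sums g y \<and> (g has_derivative Dexp y) (at y within S)"
  proof (rule has_derivative_series[OF _ _ _ x exp_converges])
    show "((\<lambda>y. y^n /\<^sub>R fact n) has_derivative (\<lambda>h. Dpow y n h /\<^sub>R fact n)) (at y within S)" for n y
      using has_derivative_scaleR_right[OF has_derivative_power_Dpow[of n y S], of "inverse (fact n)"]
      by simp
    show "\<forall>\<^sub>F n in sequentially. \<forall>y\<in>S. \<forall>h. norm ((\<Sum>i<n. Dpow y i h /\<^sub>R fact i) - Dexp y h) \<le> e * norm h"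
      if "0 < e" for e
      by (rule eventually_mono[OF Dexp_partial_sums_uniformly[OF that, of "norm x + 1"]])
         (auto simp: S_def dest: ball_subset_cball[THEN subsetD])
  qed (simp add: S_def)
  then obtain g where g: "\<And>y. y \<in> S \<Longrightarrow> (\<lambda>n. y^n /\<^sub>R fact n) sums g y"
    "\<And>y. y \<in> S \<Longrightarrow> (g has_derivative Dexp y) (at y within S)"
    by blast
  have "(g has_derivative Dexp x) (at x)"
    using g(2)[OF x] by (simp add: at_within_open[OF x S])
  moreover have "g y = exp y" if "y \<in> S" for y
    using sums_unique2[OF g(1)[OF that] exp_converges] .
  ultimately show ?thesis
    by (rule has_derivative_transform_within_open[OF _ S x])
qed

lemma bounded_linear_Dexp: "bounded_linear (Dexp x)"
  using has_derivative_exp_Dexp by (rule has_derivative_bounded_linear)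

lemma Dexp_commuting:
  fixes x l :: "'a::{real_normed_algebra_1,banach}"
  assumes "l * x = x * l"
  shows "Dexp x l = l * exp x"
proof -
  have Dpow: "Dpow x (Suc m) l = real (Suc m) *\<^sub>R (l * x^m)" for m
  proof (induction m)
    case (Suc m)
    have "x * (real (Suc m) *\<^sub>R (l * x^m)) = real (Suc m) *\<^sub>R (l * x^Suc m)"
      by (simp add: mult.assoc[symmetric] assms[symmetric])
    then show ?case
      by (simp only: Dpow_Suc[of x "Suc m"] Suc) (simp add: algebra_simps scaleR_2)
  qed (simp add: Dpow_Suc)
  have "Dpow x (Suc m) l /\<^sub>R fact (Suc m) = l * (x^m /\<^sub>R fact m)" for m
    unfolding Dpow fact_Suc of_nat_mult by (simp del: of_nat_Suc add: field_simps)
  then have "(\<lambda>m. Dpow x (Suc m) l /\<^sub>R fact (Suc m)) sums (l * exp x)"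
    using sums_mult[OF exp_converges, of l x] by simp
  then show ?thesis
    unfolding Dexp_def by (subst (asm) sums_Suc_iff) (simp add: sums_iff)
qed

lemma Dexp_commutator:
  fixes x k :: "'a::{real_normed_algebra_1,banach}"
  shows "Dexp x (k * x - x * k) = k * exp x - exp x * k"
proof -
  have "Dpow x n (k * x - x * k) = k * x^n - x^n * k" for n
  proof (induction n)
    case (Suc n)
    then show ?case
      by (simp only: Dpow_Suc Suc) (simp add: algebra_simps power_commutes mult.assoc)
  qed simp
  moreover have "(\<lambda>n. k * (x^n /\<^sub>R fact n) - (x^n /\<^sub>R fact n) * k) sums (k * exp x - exp x * k)"
    by (intro sums_diff sums_mult sums_mult2 exp_converges)
  ultimately show ?thesis
    unfolding Dexp_def by (simp add: scaleR_diff_right sums_iff)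
qed

lemma exp_conj:
  fixes p q a :: "'a::{real_normed_algebra_1,banach}"
  assumes qp: "q * p = 1" and pq: "p * q = 1"
  shows "exp (p * a * q) = p * exp a * q"
proof -
  have "(p * a * q)^n = p * a^n * q" for n
  proof (induction n)
    case (Suc n)
    have "(p * a * q)^Suc n = (p * a * q) * (p * a^n * q)"
      using Suc by simp
    also have "\<dots> = p * a * (q * p) * a^n * q"
      by (simp add: mult.assoc)
    finally show ?case
      by (simp add: qp mult.assoc)
  qed (simp add: pq)
  moreover have "(\<lambda>n. p * (a^n /\<^sub>R fact n) * q) sums (p * exp a * q)"
    by (intro sums_mult sums_mult2 exp_converges)
  ultimately have "(\<lambda>n. (p * a * q)^n /\<^sub>R fact n) sums (p * exp a * q)"
    by simp
  then show ?thesis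
    using exp_converges sums_unique2 by blast
qed

definition ad :: "'a::ring \<Rightarrow> 'a \<Rightarrow> 'a" where
  "ad a y = a * y - y * a"

lemma power_mult_eq_sum_ad:
  fixes a k :: "'a::real_algebra_1"
  shows "a^n * k = (\<Sum>i\<le>n. real (n choose i) *\<^sub>R ((ad a ^^ i) k * a^(n - i)))"
proof (induction n)
  case (Suc n)
  define Y where "Y i = (ad a ^^ i) k" for i
  have "a * Y i * a^(n - i) = Y (Suc i) * a^(n - i) + Y i * a^(Suc n - i)" if "i \<le> n" for i
  proof -
    have "Y i * a * a^(n - i) = Y i * a^(Suc n - i)"
      using that by (simp add: mult.assoc Suc_diff_le)
    then show ?thesis
      by (simp add: Y_def ad_def algebra_simps)
  qed
  then have "a^Suc n * k = (\<Sum>i\<le>n. real (n choose i) *\<^sub>R (Y (Suc i) * a^(n - i)))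
                         + (\<Sum>i\<le>n. real (n choose i) *\<^sub>R (Y i * a^(Suc n - i)))"
    by (simp add: Suc Y_def sum_distrib_left mult.assoc scaleR_add_right sum.distrib[symmetric])
  also have "(\<Sum>i\<le>n. real (n choose i) *\<^sub>R (Y i * a^(Suc n - i)))
           = (\<Sum>i\<le>Suc n. real (n choose i) *\<^sub>R (Y i * a^(Suc n - i)))"
    by simp
  also have "\<dots> = Y 0 * a^Suc n + (\<Sum>i\<le>n. real (n choose Suc i) *\<^sub>R (Y (Suc i) * a^(n - i)))"
    by (subst sum.atMost_Suc_shift) simp
  also have "(\<Sum>i\<le>n. real (n choose i) *\<^sub>R (Y (Suc i) * a^(n - i))) + \<dots>
           = Y 0 * a^Suc n + (\<Sum>i\<le>n. real (Suc n choose Suc i) *\<^sub>R (Y (Suc i) * a^(n - i)))"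
    by (simp add: sum.distrib[symmetric] scaleR_add_left)
  also have "\<dots> = (\<Sum>i\<le>Suc n. real (Suc n choose i) *\<^sub>R (Y i * a^(Suc n - i)))"
    by (subst sum.atMost_Suc_shift) simp
  finally show ?case
    by (simp add: Y_def)
qed simp

lemma norm_ad_funpow_le:
  fixes a :: "'a::real_normed_algebra"
  shows "norm ((ad a ^^ n) k) \<le> (2 * norm a)^n * norm k"
proof (induction n)
  case (Suc n)
  have "norm (ad a y) \<le> 2 * norm a * norm y" for y
  proof -
    have "norm (ad a y) \<le> norm (a * y) + norm (y * a)"
      unfolding ad_def by (rule norm_triangle_ineq4)
    also have "\<dots> \<le> norm a * norm y + norm y * norm a"
      by (intro add_mono norm_mult_ineq)
    finally show ?thesis by simp
  qed
  then have "norm ((ad a ^^ Suc n) k) \<le> 2 * norm a * norm ((ad a ^^ n) k)"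
    by simp
  also have "\<dots> \<le> 2 * norm a * ((2 * norm a)^n * norm k)"
    by (rule mult_left_mono[OF Suc]) simp
  finally show ?case by (simp add: mult_ac)
qed simp

lemma summable_norm_ad_series:
  fixes a :: "'a::real_normed_algebra"
  shows "summable (\<lambda>n. norm ((ad a ^^ n) k /\<^sub>R fact n))"
proof (rule summable_comparison_test'[OF summable_mult2[OF summable_exp_real[of "2 * norm a"]]])
  fix n
  have "norm (norm ((ad a ^^ n) k /\<^sub>R fact n)) = norm ((ad a ^^ n) k) / fact n"
    by (simp add: divide_inverse_commute)
  also have "\<dots> \<le> (2 * norm a)^n * norm k / fact n"
    by (intro divide_right_mono norm_ad_funpow_le) simp
  finally show "norm (norm ((ad a ^^ n) k /\<^sub>R fact n)) \<le> (2 * norm a)^n / fact n * norm k"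
    by simp
qed

lemma summable_norm_exp:
  fixes a :: "'a::real_normed_algebra_1"
  shows "summable (\<lambda>n. norm (a^n /\<^sub>R fact n))"
proof (rule summable_comparison_test'[OF summable_exp_real[of "norm a"]])
  show "norm (norm (a^n /\<^sub>R fact n)) \<le> norm a^n / fact n" for n
    using divide_right_mono[OF norm_power_ineq[of a n], of "fact n"]
    by (simp add: divide_inverse_commute)
qed

lemma exp_conj_sums_ad_series:
  fixes a k :: "'a::{real_normed_algebra_1,banach}"
  shows "(\<lambda>n. (ad a ^^ n) k /\<^sub>R fact n) sums (exp a * k * exp (- a))"
proof -
  define Y where "Y n = (ad a ^^ n) k /\<^sub>R fact n" for n
  define E where "E n = a^n /\<^sub>R fact n" for n
  have "(\<Sum>n. Y n) * (\<Sum>n. E n) = (\<Sum>n. \<Sum>i\<le>n. Y i * E (n - i))"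
    unfolding Y_def E_def by (rule Cauchy_product[OF summable_norm_ad_series summable_norm_exp])
  also have "(\<lambda>n. \<Sum>i\<le>n. Y i * E (n - i)) = (\<lambda>n. (a^n * k) /\<^sub>R fact n)"
  proof
    fix n
    have "Y i * E (n - i) = (real (n choose i) / fact n) *\<^sub>R ((ad a ^^ i) k * a^(n - i))"
      if "i \<in> {..n}" for i
    proof -
      have "real (n choose i) / fact n = inverse (fact i) * inverse (fact (n - i))"
        using that by (simp add: binomial_fact field_simps)
      then show ?thesis
        by (simp add: Y_def E_def)
    qed
    then show "(\<Sum>i\<le>n. Y i * E (n - i)) = (a^n * k) /\<^sub>R fact n"
      by (simp add: power_mult_eq_sum_ad scaleR_sum_right divide_inverse_commute)
  qed
  also have "(\<Sum>n. (a^n * k) /\<^sub>R fact n) = exp a * k"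
    using sums_mult2[OF exp_converges, of a k] by (simp add: sums_iff)
  finally have "(\<Sum>n. Y n) * exp a = exp a * k"
    using exp_converges[of a] by (simp add: E_def sums_iff)
  then have "exp a * k * exp (- a) = (\<Sum>n. Y n)"
    by (metis mult.assoc mult.right_neutral exp_minus_inverse)
  moreover have "summable Y"
    unfolding Y_def by (rule summable_norm_cancel[OF summable_norm_ad_series])
  ultimately show ?thesis
    unfolding Y_def by (simp add: summable_sums)
qed

lemma norm_exp_sub_one_sub_le:
  fixes x :: "'a::{real_normed_algebra_1,banach}"
  shows "norm (exp x - 1 - x) \<le> norm x^2 * exp (norm x)"
proof -
  define f where "f n = x^n /\<^sub>R fact n" for n
  have "exp x = (\<Sum>n. f (n + 2)) + (\<Sum>i<2. f i)"
    unfolding f_def exp_def by (rule suminf_split_initial_segment[OF summable_exp_generic])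
  moreover have "(\<Sum>i<2. f i) = 1 + x"
    by (simp add: f_def eval_nat_numeral)
  ultimately have tail: "exp x - 1 - x = (\<Sum>n. f (n + 2))"
    by (simp add: algebra_simps)
  have bound: "norm (f (n + 2)) \<le> norm x^2 * (norm x^n / fact n)" for n
  proof -
    have "norm (f (n + 2)) \<le> norm x^(n + 2) / fact (n + 2)"
      using divide_right_mono[OF norm_power_ineq[of x "n + 2"], of "fact (n + 2)"]
      by (simp add: f_def divide_inverse_commute)
    also have "\<dots> \<le> norm x^(n + 2) / fact n"
      by (intro divide_left_mono fact_mono) simp_all
    also have "\<dots> = norm x^2 * (norm x^n / fact n)"
      by (simp add: power_add power2_eq_square)
    finally show ?thesis .
  qed
  have g: "(\<lambda>n. norm x^2 * (norm x^n / fact n)) sums (norm x^2 * exp (norm x))"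
    using sums_mult[OF exp_converges[of "norm x"]] by (simp add: divide_inverse_commute)
  have "norm (exp x - 1 - x) \<le> (\<Sum>n. norm x^2 * (norm x^n / fact n))"
    unfolding tail by (rule norm_suminf_le[OF bound sums_summable[OF g]])
  also have "\<dots> = norm x^2 * exp (norm x)"
    by (rule sums_unique[OF g, symmetric])
  finally show ?thesis .
qed

lemma norm_exp_mult_exp_sub_exp_add_le:
  fixes x y :: "'a::{real_normed_algebra_1,banach}"
  defines "c \<equiv> norm x + norm y"
  shows "norm (exp x * exp y - exp (x + y)) \<le> c^2 * (exp c * exp c + (2 + c) * exp c + 1)"
proof -
  define r where "r z = exp z - 1 - z" for z :: 'a
  have c: "norm x \<le> c" "norm y \<le> c" "norm (x + y) \<le> c" "0 \<le> c"
    using norm_triangle_ineq[of x y] by (simp_all add: c_def)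
  have r: "norm (r z) \<le> c^2 * exp c" if "norm z \<le> c" for z
    unfolding r_def using that
    by (intro order_trans[OF norm_exp_sub_one_sub_le] mult_mono power_mono) auto
  have "norm (exp y) \<le> exp c"
    using norm_exp[of y] c(2) by (meson exp_le_cancel_iff order_trans)
  then have 1: "norm (r x * exp y) \<le> c^2 * exp c * exp c"
    using r[OF c(1)] by (intro order_trans[OF norm_mult_ineq] mult_mono) auto
  have "norm (1 + x) \<le> 1 + c"
    using norm_triangle_ineq[of 1 x] c(1) by simp
  then have 2: "norm ((1 + x) * r y) \<le> (1 + c) * (c^2 * exp c)"
    using r[OF c(2)] c(4) by (intro order_trans[OF norm_mult_ineq] mult_mono) auto
  have 3: "norm (x * y) \<le> c * c"
    using c by (intro order_trans[OF norm_mult_ineq] mult_mono) auto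
  have decomp: "exp x * exp y - exp (x + y) = r x * exp y + (1 + x) * r y + x * y - r (x + y)"
    by (simp add: r_def algebra_simps)
  have "norm (exp x * exp y - exp (x + y))
               \<le> norm (r x * exp y) + norm ((1 + x) * r y) + norm (x * y) + norm (r (x + y))"
    unfolding decomp
    using norm_triangle_ineq4[of "r x * exp y + (1 + x) * r y + x * y" "r (x + y)"]
      norm_triangle_ineq[of "r x * exp y + (1 + x) * r y" "x * y"]
      norm_triangle_ineq[of "r x * exp y" "(1 + x) * r y"]
    by linarith
  also have "\<dots> \<le> c^2 * exp c * exp c + (1 + c) * (c^2 * exp c) + c * c + c^2 * exp c"
    using 1 2 3 r[OF c(3)] by linarith
  also have "\<dots> = c^2 * (exp c * exp c + (2 + c) * exp c + 1)"
    by (simp add: algebra_simps power2_eq_square)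
  finally show ?thesis .
qed

lemma norm_power_sub_power_le:
  fixes p q :: "'a::real_normed_algebra_1"
  assumes p: "norm p \<le> M" and q: "norm q \<le> M"
  shows "norm (p^Suc n - q^Suc n) \<le> real (Suc n) * M^n * norm (p - q)"
proof (induction n)
  case (Suc n)
  have M: "0 \<le> M" using p norm_ge_zero order_trans by blast
  have "p^Suc (Suc n) - q^Suc (Suc n) = p * (p^Suc n - q^Suc n) + (p - q) * q^Suc n"
    by (simp add: algebra_simps)
  then have "norm (p^Suc (Suc n) - q^Suc (Suc n)) \<le> norm (p * (p^Suc n - q^Suc n)) + norm ((p - q) * q^Suc n)"
    by (simp only: norm_triangle_ineq)
  also have "\<dots> \<le> norm p * norm (p^Suc n - q^Suc n) + norm (p - q) * norm (q^Suc n)"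
    by (intro add_mono norm_mult_ineq)
  also have "\<dots> \<le> M * (real (Suc n) * M^n * norm (p - q)) + norm (p - q) * M^Suc n"
    by (intro add_mono mult_mono Suc p order_refl norm_ge_zero M norm_power_le_power q)
  also have "\<dots> = real (Suc (Suc n)) * M^Suc n * norm (p - q)"
    by (simp add: algebra_simps)
  finally show ?case .
qed simp

lemma exp_scaleR_of_nat:
  fixes x :: "'a::{real_normed_algebra_1,banach}"
  shows "exp (real n *\<^sub>R x) = exp x ^ n"
proof (induction n)
  case (Suc n)
  have "exp (real (Suc n) *\<^sub>R x) = exp (x + real n *\<^sub>R x)"
    by (simp add: algebra_simps)
  also have "\<dots> = exp x * exp (real n *\<^sub>R x)"
    by (rule exp_add_commuting) simp
  finally show ?case by (simp add: Suc)
qed simp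

lemma norm_exp_product_power_sub_exp_le:
  fixes a b :: "'a::{real_normed_algebra_1,banach}"
  assumes n: "n \<ge> 1"
  defines "c \<equiv> norm a + norm b"
  defines "\<kappa> \<equiv> exp c * exp c + (2 + c) * exp c + 1"
  shows "norm ((exp (a /\<^sub>R real n) * exp (b /\<^sub>R real n))^n - exp (a + b)) \<le> exp c * c^2 * \<kappa> / real n"
proof -
  define x y where "x = a /\<^sub>R real n" and "y = b /\<^sub>R real n"
  define d where "d = c / real n"
  obtain m where m: "n = Suc m" using n by (cases n) auto
  have d: "0 \<le> d" "d \<le> c" "real m * d \<le> c"
    using n by (auto simp: d_def c_def m field_simps)
  have xy: "norm x + norm y = d"
    by (simp add: x_def y_def d_def c_def divide_inverse_commute distrib_left)
  have "norm (exp x * exp y) \<le> exp d"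
    using norm_mult_ineq[of "exp x" "exp y"] mult_mono[OF norm_exp[of x] norm_exp[of y]]
    by (simp add: xy[symmetric] exp_add)
  moreover have "norm (exp (x + y)) \<le> exp d"
    using norm_exp[of "x + y"] norm_triangle_ineq[of x y] xy by (meson exp_le_cancel_iff order_trans)
  ultimately have "norm ((exp x * exp y)^n - exp (x + y)^n)
                     \<le> real n * exp d ^ m * norm (exp x * exp y - exp (x + y))"
    unfolding m by (rule norm_power_sub_power_le)
  also have "\<dots> \<le> real n * exp c * (d^2 * \<kappa>)"
  proof (intro mult_mono order_refl)
    show "exp d ^ m \<le> exp c"
      using d by (simp add: exp_of_nat_mult[symmetric])
    have "exp d * exp d + (2 + d) * exp d + 1 \<le> \<kappa>"
      unfolding \<kappa>_def using d by (intro add_mono mult_mono) auto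
    then show "norm (exp x * exp y - exp (x + y)) \<le> d^2 * \<kappa>"
      using norm_exp_mult_exp_sub_exp_add_le[of x y] unfolding xy
      by (meson mult_left_mono order_trans zero_le_power2)
  qed (simp_all add: d)
  also have "\<dots> = exp c * c^2 * \<kappa> / real n"
    using n by (simp add: d_def power2_eq_square field_simps)
  also have "exp (x + y)^n = exp (a + b)"
    using n by (simp add: x_def y_def exp_scaleR_of_nat[symmetric] scaleR_add_right[symmetric])
  finally show ?thesis
    by (simp add: x_def y_def)
qed

lemma Lie_product_formula:
  fixes a b :: "'a::{real_normed_algebra_1,banach}"
  shows "(\<lambda>n. (exp (a /\<^sub>R real n) * exp (b /\<^sub>R real n))^n) \<longlonglongrightarrow> exp (a + b)"
proof -
  have "(\<lambda>n. (exp (a /\<^sub>R real n) * exp (b /\<^sub>R real n))^n - exp (a + b)) \<longlonglongrightarrow> 0"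
    using norm_exp_product_power_sub_exp_le[of _ a b]
    by (intro Lim_null_comparison[OF eventually_sequentiallyI lim_const_over_n]) auto
  then show ?thesis
    by (rule LIM_zero_cancel)
qed

section \<open>Complex matrices as a Banach algebra\<close>

lemma norm_vec_le_sum_norm: "norm x \<le> (\<Sum>i\<in>UNIV. norm (x $ i))"
  by (simp add: norm_vec_def L2_set_le_sum)

lemma matrix_add_rdistrib: "(B + C) ** A = B ** A + C ** A"
  by (vector matrix_matrix_mult_def sum.distrib[symmetric] field_simps)

lemma matrix_diff_rdistrib: "(B - C) ** A = B ** A - C ** A"
  for A B C :: "'a::ring_1^'n^'n"
  by (simp add: matrix_matrix_mult_def vec_eq_iff left_diff_distrib sum_subtractf)

lemma cmat_entry_le_onorm:
  fixes A :: "'n::finite cmat"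
  shows "norm (A $ i $ j) \<le> onorm ((*v) A)"
proof -
  have "A $ i $ j = (A *v axis j 1) $ i"
    by (simp add: matrix_vector_mult_def axis_def if_distrib if_distribR cong: if_cong)
  also have "norm \<dots> \<le> norm (A *v axis j 1)"
    by (rule Finite_Cartesian_Product.norm_nth_le)
  also have "\<dots> \<le> onorm ((*v) A) * norm (axis j (1::complex))"
    by (rule onorm[OF matrix_vector_mul_bounded_linear])
  also have "norm (axis j (1::complex)) = 1"
    by (simp add: norm_vec_def axis_def L2_set_def if_distrib if_distribR cong: if_cong)
  finally show ?thesis by simp
qed

lemma cmat_norm_le_onorm:
  fixes A :: "'n::finite cmat"
  shows "norm A \<le> real CARD('n) * real CARD('n) * onorm ((*v) A)"
proof -
  have "norm A \<le> (\<Sum>i\<in>UNIV. norm (A $ i))"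
    by (rule norm_vec_le_sum_norm)
  also have "\<dots> \<le> (\<Sum>i\<in>UNIV. \<Sum>j\<in>UNIV. norm (A $ i $ j))"
    by (intro sum_mono norm_vec_le_sum_norm)
  also have "\<dots> \<le> (\<Sum>i\<in>(UNIV::'n set). \<Sum>j\<in>(UNIV::'n set). onorm ((*v) A))"
    by (intro sum_mono cmat_entry_le_onorm)
  finally show ?thesis by simp
qed

text \<open>A copy of the matrices normed by the operator norm, which is submultiplicative and
  normalised, so that the exponential series of the Banach algebra is available.\<close>

typedef (overloaded) 'n cmat_alg = "UNIV :: ('n::finite) cmat set"
  morphisms mrep mabs by auto

setup_lifting type_definition_cmat_alg

instantiation cmat_alg :: (finite) real_normed_algebra_1
begin

lift_definition zero_cmat_alg :: "'a cmat_alg" is 0 .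
lift_definition one_cmat_alg :: "'a cmat_alg" is "mat 1" .
lift_definition plus_cmat_alg :: "'a cmat_alg \<Rightarrow> 'a cmat_alg \<Rightarrow> 'a cmat_alg" is "(+)" .
lift_definition minus_cmat_alg :: "'a cmat_alg \<Rightarrow> 'a cmat_alg \<Rightarrow> 'a cmat_alg" is "(-)" .
lift_definition uminus_cmat_alg :: "'a cmat_alg \<Rightarrow> 'a cmat_alg" is "uminus" .
lift_definition times_cmat_alg :: "'a cmat_alg \<Rightarrow> 'a cmat_alg \<Rightarrow> 'a cmat_alg" is "(**)" .
lift_definition scaleR_cmat_alg :: "real \<Rightarrow> 'a cmat_alg \<Rightarrow> 'a cmat_alg" is "scaleR" .
lift_definition norm_cmat_alg :: "'a cmat_alg \<Rightarrow> real" is "\<lambda>A. onorm ((*v) A)" .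

definition sgn_cmat_alg :: "'a cmat_alg \<Rightarrow> 'a cmat_alg" where
  "sgn_cmat_alg x = inverse (norm x) *\<^sub>R x"
definition dist_cmat_alg :: "'a cmat_alg \<Rightarrow> 'a cmat_alg \<Rightarrow> real" where
  "dist_cmat_alg x y = norm (x - y)"
definition uniformity_cmat_alg :: "('a cmat_alg \<times> 'a cmat_alg) filter" where
  "uniformity_cmat_alg = (INF e\<in>{0<..}. principal {(x, y). dist x y < e})"
definition open_cmat_alg :: "'a cmat_alg set \<Rightarrow> bool" where
  "open_cmat_alg U \<longleftrightarrow> (\<forall>x\<in>U. \<forall>\<^sub>F (x', y) in uniformity. x' = x \<longrightarrow> y \<in> U)"

instance
proof
  fix a b c :: "'a cmat_alg" and r s :: real
  show "a + b + c = a + (b + c)" by transfer (simp add: add.assoc)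
  show "a + b = b + a" by transfer (simp add: add.commute)
  show "0 + a = a" by transfer simp
  show "- a + a = 0" by transfer simp
  show "a - b = a + - b" by transfer simp
  show "r *\<^sub>R (a + b) = r *\<^sub>R a + r *\<^sub>R b" by transfer (simp add: scaleR_add_right)
  show "(r + s) *\<^sub>R a = r *\<^sub>R a + s *\<^sub>R a" by transfer (simp add: scaleR_add_left)
  show "r *\<^sub>R s *\<^sub>R a = (r * s) *\<^sub>R a" by transfer simp
  show "1 *\<^sub>R a = a" by transfer simp
  show "a * b * c = a * (b * c)" by transfer (simp add: matrix_mul_assoc)
  show "(a + b) * c = a * c + b * c" by transfer (simp add: matrix_add_rdistrib)
  show "a * (b + c) = a * b + a * c" by transfer (simp add: matrix_add_ldistrib)
  show "1 * a = a" by transfer simp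
  show "a * 1 = a" by transfer simp
  show "(0::'a cmat_alg) \<noteq> 1" by transfer (auto simp: vec_eq_iff mat_def)
  show "r *\<^sub>R a * b = r *\<^sub>R (a * b)" by transfer (simp add: scalar_matrix_assoc)
  show "a * r *\<^sub>R b = r *\<^sub>R (a * b)" by transfer (simp add: matrix_scalar_ac scalar_matrix_assoc)
  have mult: "(*v) (A ** B) = (*v) A \<circ> (*v) B" for A B :: "'a cmat"
    by (rule ext) (simp add: matrix_vector_mul_assoc)
  show "norm (a * b) \<le> norm a * norm b"
    by transfer (simp add: mult onorm_compose)
  have one: "(*v) (mat 1 :: 'a cmat) = (\<lambda>x. x)"
    by (rule ext) simp
  show "norm (1::'a cmat_alg) = 1"
    by transfer (simp add: one onorm_id)
  have add: "(*v) (A + B) = (\<lambda>x. A *v x + B *v x)" for A B :: "'a cmat"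
    by (rule ext) (simp add: matrix_vector_mult_add_rdistrib)
  show "norm (a + b) \<le> norm a + norm b"
    by transfer (simp add: add onorm_triangle)
  have scale: "(*v) (t *\<^sub>R A) = (\<lambda>x. t *\<^sub>R (A *v x))" for t and A :: "'a cmat"
    by (rule ext) (simp add: matrix_vector_mult_def vec_eq_iff scaleR_sum_right)
  show "norm (r *\<^sub>R a) = \<bar>r\<bar> * norm a"
    by transfer (simp add: scale onorm_scaleR)
  show "(norm a = 0) = (a = 0)"
  proof transfer
    show "(onorm ((*v) A) = 0) = (A = 0)" for A :: "'a cmat"
      using onorm_eq_0[OF matrix_vector_mul_bounded_linear, of A]
      by (metis matrix_eq matrix_vector_mult_0)
  qed
  show "sgn a = inverse (norm a) *\<^sub>R a" by (simp add: sgn_cmat_alg_def)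
  show "dist a b = norm (a - b)" by (simp add: dist_cmat_alg_def)
  show "(uniformity :: ('a cmat_alg \<times> 'a cmat_alg) filter) = (INF e\<in>{0<..}. principal {(x, y). dist x y < e})"
    by (simp add: uniformity_cmat_alg_def)
  show "open U = (\<forall>x\<in>U. \<forall>\<^sub>F (x', y) in uniformity. x' = x \<longrightarrow> y \<in> U)" for U :: "'a cmat_alg set"
    by (simp add: open_cmat_alg_def)
qed

end

lemma mrep_add [simp]: "mrep (x + y) = mrep x + mrep y" by transfer simp
lemma mrep_diff [simp]: "mrep (x - y) = mrep x - mrep y" by transfer simp
lemma mrep_uminus [simp]: "mrep (- x) = - mrep x" by transfer simp
lemma mrep_one [simp]: "mrep 1 = mat 1" by transfer simp
lemma mrep_mult [simp]: "mrep (x * y) = mrep x ** mrep y" by transfer simp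
lemma mrep_scaleR [simp]: "mrep (c *\<^sub>R x) = c *\<^sub>R mrep x" by transfer simp
lemma mrep_mabs [simp]: "mrep (mabs A) = A" by (simp add: mabs_inverse)

lemma mabs_mult: "mabs (A ** B) = mabs A * mabs B"
  by (metis mrep_mabs mrep_mult mrep_inject)
lemma mabs_add: "mabs (A + B) = mabs A + mabs B"
  by (metis mrep_mabs mrep_add mrep_inject)
lemma mabs_diff: "mabs (A - B) = mabs A - mabs B"
  by (metis mrep_mabs mrep_diff mrep_inject)
lemma mabs_uminus: "mabs (- A) = - mabs A"
  by (metis mrep_mabs mrep_uminus mrep_inject)
lemma mabs_scaleR: "mabs (c *\<^sub>R A) = c *\<^sub>R mabs A"
  by (metis mrep_mabs mrep_scaleR mrep_inject)
lemma mabs_one: "mabs (mat 1) = 1"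
  by (metis mrep_mabs mrep_one mrep_inject)

lemma bounded_linear_mrep: "bounded_linear (mrep :: 'n::finite cmat_alg \<Rightarrow> 'n cmat)"
proof (rule bounded_linear_intro[where K="real CARD('n) * real CARD('n)"])
  show "norm (mrep x) \<le> norm x * (real CARD('n) * real CARD('n))" for x :: "'n cmat_alg"
    using cmat_norm_le_onorm[of "mrep x"] by transfer (simp add: mult.commute)
qed simp_all

lemma bounded_linear_mabs: "bounded_linear (mabs :: 'n::finite cmat \<Rightarrow> 'n cmat_alg)"
  by (rule bounded_linearI') (simp_all add: mabs_add mabs_scaleR)

instance cmat_alg :: (finite) banach
proof
  fix X :: "nat \<Rightarrow> 'a cmat_alg"
  assume "Cauchy X"
  then have "Cauchy (\<lambda>n. mrep (X n))"
    by (rule bounded_linear.Cauchy[OF bounded_linear_mrep])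
  then obtain L where "(\<lambda>n. mrep (X n)) \<longlonglongrightarrow> L"
    using Cauchy_convergent_iff convergent_def by blast
  then have "(\<lambda>n. mabs (mrep (X n))) \<longlonglongrightarrow> mabs L"
    by (rule bounded_linear.tendsto[OF bounded_linear_mabs])
  then show "convergent X" by (auto simp: mrep_inverse convergent_def)
qed

lemma mpow_eq_mrep_power: "mpow A k = mrep (mabs A ^ k)"
  by (induction k) simp_all

lemma mexp_eq_mrep_exp: "mexp A = mrep (exp (mabs A))"
proof -
  have "(\<lambda>k. mrep (mabs A ^ k /\<^sub>R fact k)) sums mrep (exp (mabs A))"
    by (rule bounded_linear.sums[OF bounded_linear_mrep exp_converges])
  then show ?thesis
    unfolding mexp_def by (simp add: mpow_eq_mrep_power divide_inverse_commute sums_iff)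
qed

lemma mexp_sums: "(\<lambda>k. (1 / fact k) *\<^sub>R mpow A k) sums mexp A"
  using bounded_linear.sums[OF bounded_linear_mrep exp_converges, of "mabs A"]
  by (simp add: mexp_eq_mrep_exp mpow_eq_mrep_power divide_inverse_commute)

lemma mexp_zero [simp]: "mexp 0 = mat 1"
  by (simp add: mexp_eq_mrep_exp linear_0[OF bounded_linear.linear[OF bounded_linear_mabs]])

lemma mexp_minus_right: "mexp A ** mexp (- A) = mat 1"
  by (simp add: mexp_eq_mrep_exp mabs_uminus exp_minus_inverse flip: mrep_mult)

lemma matrix_inv_eq:
  fixes A B :: "'n::finite cmat"
  assumes "A ** B = mat 1"
  shows "matrix_inv A = B"
proof -
  have BA: "B ** A = mat 1"
    using assms matrix_left_right_inverse by blast
  have inv: "A ** matrix_inv A = mat 1 \<and> matrix_inv A ** A = mat 1"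
    unfolding matrix_inv_def by (rule someI[of _ B]) (simp add: assms BA)
  then have "matrix_inv A = matrix_inv A ** (A ** B)"
    by (simp add: assms)
  also have "\<dots> = B"
    using inv by (simp add: matrix_mul_assoc)
  finally show ?thesis .
qed

lemma matrix_inv_mexp: "matrix_inv (mexp A) = mexp (- A)"
  by (rule matrix_inv_eq[OF mexp_minus_right])

lemma mexp_conj:
  fixes P Q A :: "'n::finite cmat"
  assumes "Q ** P = mat 1"
  shows "mexp (P ** A ** Q) = P ** mexp A ** Q"
proof -
  have "P ** Q = mat 1"
    using assms matrix_left_right_inverse by blast
  with assms have "mabs Q * mabs P = 1" "mabs P * mabs Q = 1"
    by (simp_all add: mabs_one flip: mabs_mult)
  then show ?thesis
    by (simp add: mexp_eq_mrep_exp mabs_mult exp_conj)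
qed

lemma adj_adj [simp]: "adj (adj A) = A"
  by (simp add: adj_def vec_eq_iff)

lemma adj_one [simp]: "adj (mat 1) = mat 1"
  by (simp add: adj_def vec_eq_iff mat_def)

lemma adj_mult: "adj (A ** B) = adj B ** adj A"
  by (simp add: adj_def matrix_matrix_mult_def vec_eq_iff mult.commute)

lemma adj_cscale: "adj (cscale c A) = cscale (cnj c) (adj A)"
  by (simp add: adj_def cscale_def vec_eq_iff)

lemma adj_scaleR: "adj (c *\<^sub>R A) = c *\<^sub>R adj A"
  by (simp add: adj_def vec_eq_iff)

lemma bounded_linear_adj: "bounded_linear (adj :: 'n::finite cmat \<Rightarrow> 'n cmat)"
  by (rule bounded_linearI') (simp_all add: adj_def vec_eq_iff)

lemma mpow_commute: "mpow A k ** A = A ** mpow A k"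
  by (induction k) (simp_all add: matrix_mul_assoc[symmetric])

lemma adj_mexp: "adj (mexp A) = mexp (adj A)"
proof -
  have adj_mpow: "adj (mpow A k) = mpow (adj A) k" for k
  proof (induction k)
    case 0
    show ?case by (simp add: adj_def mat_def vec_eq_iff)
  next
    case (Suc k)
    have "adj (mpow A (Suc k)) = mpow (adj A) k ** adj A"
      by (simp add: adj_mult Suc)
    also have "\<dots> = mpow (adj A) (Suc k)"
      by (simp add: mpow_commute)
    finally show ?case .
  qed
  have "(\<lambda>k. adj ((1 / fact k) *\<^sub>R mpow A k)) sums adj (mexp A)"
    by (rule bounded_linear.sums[OF bounded_linear_adj mexp_sums])
  then have "(\<lambda>k. (1 / fact k) *\<^sub>R mpow (adj A) k) sums adj (mexp A)"
    by (simp add: adj_mpow adj_scaleR)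
  then show ?thesis
    using mexp_sums sums_unique2 by blast
qed

lemma has_vector_derivative_mexp_scaleR:
  "((\<lambda>t. mexp (t *\<^sub>R A)) has_vector_derivative (mexp (t *\<^sub>R A) ** A)) (at t)"
  using bounded_linear.has_vector_derivative[OF bounded_linear_mrep
      exp_scaleR_has_vector_derivative_right[of "mabs A" t]]
  by (simp add: mexp_eq_mrep_exp mabs_scaleR)

lemma has_vector_derivative_mexp_conj:
  "((\<lambda>t. mexp (t *\<^sub>R X) ** Y ** mexp (t *\<^sub>R (- X))) has_vector_derivative brk X Y) (at 0)"
proof -
  define a y where "a = mabs X" and "y = mabs Y"
  have d: "((\<lambda>t. exp (t *\<^sub>R a) * y) has_vector_derivative
          (exp (0 *\<^sub>R a) * 0 + exp (0 *\<^sub>R a) * a * y)) (at 0)"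
    by (intro has_vector_derivative_mult exp_scaleR_has_vector_derivative_right
        has_vector_derivative_const)
  have "((\<lambda>t. exp (t *\<^sub>R a) * y * exp (t *\<^sub>R (- a))) has_vector_derivative
      (exp (0 *\<^sub>R a) * y * (exp (0 *\<^sub>R (- a)) * (- a))
        + (exp (0 *\<^sub>R a) * 0 + exp (0 *\<^sub>R a) * a * y) * exp (0 *\<^sub>R (- a)))) (at 0)"
    by (intro has_vector_derivative_mult d exp_scaleR_has_vector_derivative_right)
  from bounded_linear.has_vector_derivative[OF bounded_linear_mrep this]
  show ?thesis
    by (simp add: a_def y_def brk_def mexp_eq_mrep_exp mabs_scaleR mabs_uminus)
qed

lemma has_derivative_mexp: "(mexp has_derivative (\<lambda>h. mrep (Dexp (mabs s) (mabs h)))) (at s)"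
proof -
  have "((exp \<circ> mabs) has_derivative (Dexp (mabs s) \<circ> mabs)) (at s)"
    by (rule diff_chain_at[OF bounded_linear_imp_has_derivative[OF bounded_linear_mabs]
          has_derivative_exp_Dexp])
  from bounded_linear.has_derivative[OF bounded_linear_mrep this]
  show ?thesis
    by (simp add: mexp_eq_mrep_exp[abs_def] o_def)
qed

lemma frechet_derivative_mexp:
  assumes "lam ** s = s ** lam"
  shows "frechet_derivative mexp (at s) (lam + brk k s) = lam ** mexp s + brk k (mexp s)"
proof -
  have "mabs lam * mabs s = mabs s * mabs lam"
    using assms by (simp flip: mabs_mult)
  then have "Dexp (mabs s) (mabs lam + (mabs k * mabs s - mabs s * mabs k))
               = mabs lam * exp (mabs s) + (mabs k * exp (mabs s) - exp (mabs s) * mabs k)"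
    by (simp add: linear_add[OF bounded_linear.linear[OF bounded_linear_Dexp]]
        Dexp_commuting Dexp_commutator)
  then show ?thesis
    unfolding frechet_derivative_at[OF has_derivative_mexp, symmetric]
    by (simp add: brk_def mexp_eq_mrep_exp mabs_add mabs_diff mabs_mult)
qed

lemma brk_funpow_eq_ad_funpow: "(brk A ^^ n) K = mrep ((ad (mabs A) ^^ n) (mabs K))"
  by (induction n) (simp_all add: brk_def ad_def)

lemma summable_norm_brk_series:
  fixes A K :: "'n::finite cmat"
  shows "summable (\<lambda>n. norm ((1 / fact n) *\<^sub>R (brk A ^^ n) K))"
proof -
  obtain c where c: "\<And>x::'n::finite cmat_alg. norm (mrep x) \<le> norm x * c"
    using bounded_linear.bounded[OF bounded_linear_mrep] by blast
  show ?thesis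
  proof (rule summable_comparison_test'[OF summable_mult2[OF summable_norm_ad_series]])
    show "norm (norm ((1 / fact n) *\<^sub>R (brk A ^^ n) K))
            \<le> norm ((ad (mabs A) ^^ n) (mabs K) /\<^sub>R fact n) * c" for n
      using c[of "(ad (mabs A) ^^ n) (mabs K) /\<^sub>R fact n"]
      by (simp add: brk_funpow_eq_ad_funpow divide_inverse_commute)
  qed
qed

lemma mexp_conj_sums_brk_series:
  "(\<lambda>n. (1 / fact n) *\<^sub>R (brk A ^^ n) K) sums (mexp A ** K ** mexp (- A))"
  using bounded_linear.sums[OF bounded_linear_mrep exp_conj_sums_ad_series[of "mabs A" "mabs K"]]
  by (simp add: brk_funpow_eq_ad_funpow mexp_eq_mrep_exp mabs_uminus inverse_eq_divide)

lemma Lie_product_formula_mexp: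
  "(\<lambda>n. mpow (mexp ((1 / real n) *\<^sub>R A) ** mexp ((1 / real n) *\<^sub>R B)) n) \<longlonglongrightarrow> mexp (A + B)"
  using bounded_linear.tendsto[OF bounded_linear_mrep Lie_product_formula[of "mabs A" "mabs B"]]
  by (simp add: mpow_eq_mrep_power mexp_eq_mrep_exp mrep_inverse mabs_mult mabs_add mabs_scaleR
      inverse_eq_divide)

section \<open>The Lie algebra of the maximal compact subgroup\<close>

lemma has_vector_derivative_in_closed_subspace:
  fixes f :: "real \<Rightarrow> 'a::real_normed_vector"
  assumes V: "closed V" "subspace V" and f: "\<And>t. f t \<in> V"
    and d: "(f has_vector_derivative f') (at x)"
  shows "f' \<in> V"
proof -
  have T: "((\<lambda>y. norm ((f y - f x) - (y - x) *\<^sub>R f') / norm (y - x)) \<longlongrightarrow> 0) (at x)"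
    using d unfolding has_vector_derivative_def has_derivative_iff_norm by simp
  have "\<forall>\<^sub>F y in at x. norm ((f y - f x) - (y - x) *\<^sub>R f') / norm (y - x)
                      = norm ((f y - f x) /\<^sub>R (y - x) - f')"
  proof (rule eventually_mono)
    show "\<forall>\<^sub>F y in at x. y \<noteq> x"
      by (simp add: eventually_at_filter)
    fix y assume "y \<noteq> x"
    then have "(f y - f x) /\<^sub>R (y - x) - f' = (1 / (y - x)) *\<^sub>R ((f y - f x) - (y - x) *\<^sub>R f')"
      by (simp add: scaleR_diff_right inverse_eq_divide)
    then show "norm ((f y - f x) - (y - x) *\<^sub>R f') / norm (y - x) = norm ((f y - f x) /\<^sub>R (y - x) - f')"
      by (simp add: divide_inverse_commute)
  qed
  then have "((\<lambda>y. norm ((f y - f x) /\<^sub>R (y - x) - f')) \<longlongrightarrow> 0) (at x)"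
    using T by (rule tendsto_cong[THEN iffD1])
  then have "((\<lambda>y. (f y - f x) /\<^sub>R (y - x)) \<longlongrightarrow> f') (at x)"
    by (rule LIM_zero_cancel[OF tendsto_norm_zero_iff[THEN iffD1]])
  moreover have "\<forall>\<^sub>F y in at x. (f y - f x) /\<^sub>R (y - x) \<in> V"
    by (simp add: f subspace_scale[OF V(2)] subspace_diff[OF V(2)])
  ultimately show ?thesis
    by (intro Lim_in_closed_set[OF V(1) _ at_neq_bot])
qed

lemma polyfun_tendsto:
  assumes "p \<in> polyfun" and "X \<longlonglongrightarrow> L"
  shows "(\<lambda>k. p (X k)) \<longlonglongrightarrow> p L"
  using assms(1)
proof induction
  case (pcoord i j)
  show ?case by (intro tendsto_vec_nth assms(2))
qed (auto intro: tendsto_add tendsto_mult)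

context
  fixes G :: "'n::finite cmat set"
  assumes G: "complex_reductive G"
begin

lemma G_one: "mat 1 \<in> G" and G_mult: "A \<in> G \<Longrightarrow> B \<in> G \<Longrightarrow> A ** B \<in> G"
  and G_adj: "A \<in> G \<Longrightarrow> adj A \<in> G"
  using G unfolding complex_reductive_def algebraic_subgroup_def by auto

lemma maxK_one: "mat 1 \<in> maxK G"
  by (simp add: maxK_def G_one)

lemma maxK_mult:
  assumes "g \<in> maxK G" and "h \<in> maxK G"
  shows "g ** h \<in> maxK G"
proof -
  have "g ** h ** adj (g ** h) = g ** (h ** adj h) ** adj g"
    by (simp add: adj_mult matrix_mul_assoc)
  then show ?thesis
    using assms by (simp add: maxK_def G_mult)
qed

lemma maxK_adj:
  assumes "g \<in> maxK G"
  shows "adj g \<in> maxK G" and "adj g ** g = mat 1" and "matrix_inv g = adj g"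
proof -
  have g: "g ** adj g = mat 1"
    using assms by (simp add: maxK_def)
  then show inv: "adj g ** g = mat 1"
    using matrix_left_right_inverse by blast
  show "adj g \<in> maxK G"
    using assms inv by (simp add: maxK_def G_adj)
  show "matrix_inv g = adj g"
    by (rule matrix_inv_eq[OF g])
qed

lemma maxK_mpow: "g \<in> maxK G \<Longrightarrow> mpow g n \<in> maxK G"
  by (induction n) (simp_all add: maxK_one maxK_mult)

lemma maxK_closed_sequentially:
  assumes X: "\<And>k. X k \<in> maxK G" and L: "X \<longlonglongrightarrow> L"
  shows "L \<in> maxK G"
proof -
  obtain P where P: "P \<subseteq> polyfun" "G = {A. invertible A \<and> (\<forall>p\<in>P. p A = 0)}"
    using G unfolding complex_reductive_def algebraic_subgroup_def by blast
  have "(\<lambda>k. mabs (X k) * mabs (adj (X k))) \<longlonglongrightarrow> mabs L * mabs (adj L)"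
    by (intro tendsto_mult bounded_linear.tendsto[OF bounded_linear_mabs]
          bounded_linear.tendsto[OF bounded_linear_adj] L)
  from bounded_linear.tendsto[OF bounded_linear_mrep this]
  have "(\<lambda>k. X k ** adj (X k)) \<longlonglongrightarrow> L ** adj L"
    by simp
  moreover have "(\<lambda>k. X k ** adj (X k)) = (\<lambda>k. mat 1)"
    using X by (simp add: maxK_def)
  ultimately have LL: "L ** adj L = mat 1"
    using LIMSEQ_unique[OF tendsto_const] by fastforce
  then have "invertible L"
    unfolding invertible_def using matrix_left_right_inverse by blast
  moreover have "p L = 0" if p: "p \<in> P" for p
  proof -
    have "(\<lambda>k. p (X k)) = (\<lambda>k. 0)"
      using X p P(2) by (auto simp: maxK_def)
    then show ?thesis
      using polyfun_tendsto[OF subsetD[OF P(1) p] L] LIMSEQ_unique[OF tendsto_const] by fastforce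
  qed
  ultimately show ?thesis
    using LL P(2) by (simp add: maxK_def)
qed

lemma kk_iff: "X \<in> kk G \<longleftrightarrow> (\<forall>t::real. mexp (t *\<^sub>R X) \<in> maxK G)"
  by (simp add: kk_def lie_alg_def)

text \<open>Closure of \<open>k\<close> under addition is where the Lie product formula and the algebraicity
  of \<open>G\<close> (through the closedness of \<open>K\<close>) enter.\<close>

lemma kk_add:
  assumes X: "X \<in> kk G" and Y: "Y \<in> kk G"
  shows "X + Y \<in> kk G"
  unfolding kk_iff
proof
  fix t :: real
  have "(\<lambda>n. mpow (mexp ((1 / real n) *\<^sub>R (t *\<^sub>R X)) ** mexp ((1 / real n) *\<^sub>R (t *\<^sub>R Y))) n)
          \<longlonglongrightarrow> mexp (t *\<^sub>R X + t *\<^sub>R Y)"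
    by (rule Lie_product_formula_mexp)
  moreover have "mpow (mexp ((1 / real n) *\<^sub>R (t *\<^sub>R X)) ** mexp ((1 / real n) *\<^sub>R (t *\<^sub>R Y))) n \<in> maxK G" for n
    using X Y by (simp add: kk_iff maxK_mpow maxK_mult)
  ultimately have "mexp (t *\<^sub>R X + t *\<^sub>R Y) \<in> maxK G"
    by (rule maxK_closed_sequentially[rotated])
  then show "mexp (t *\<^sub>R (X + Y)) \<in> maxK G"
    by (simp add: scaleR_add_right)
qed

lemma subspace_kk: "subspace (kk G)"
  by (rule subspaceI) (simp_all add: kk_iff maxK_one kk_add[unfolded kk_iff])

lemma closed_kk: "closed (kk G)"
  by (rule closed_subspace[OF subspace_kk])

lemma kk_skew:
  assumes X: "X \<in> kk G"
  shows "adj X = - X"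
proof -
  have "mexp (t *\<^sub>R adj X) = mexp (t *\<^sub>R (- X))" for t
  proof -
    have "adj (mexp (t *\<^sub>R X)) = matrix_inv (mexp (t *\<^sub>R X))"
      using X maxK_adj(3) by (simp add: kk_iff)
    then show ?thesis
      by (simp add: adj_mexp adj_scaleR matrix_inv_mexp)
  qed
  then have "((\<lambda>t. mexp (t *\<^sub>R adj X)) has_vector_derivative (mexp (0 *\<^sub>R (- X)) ** (- X))) (at 0)"
    using has_vector_derivative_mexp_scaleR[of "- X" 0] by simp
  with has_vector_derivative_mexp_scaleR[of "adj X" 0] show ?thesis
    using vector_derivative_unique_at by fastforce
qed

lemma kk_conj:
  assumes g: "g \<in> maxK G" and Y: "Y \<in> kk G"
  shows "g ** Y ** adj g \<in> kk G"
  unfolding kk_iff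
proof
  fix t :: real
  have "mexp (t *\<^sub>R (g ** Y ** adj g)) = g ** mexp (t *\<^sub>R Y) ** adj g"
    using mexp_conj[OF maxK_adj(2)[OF g], of "t *\<^sub>R Y"]
    by (simp add: scalar_matrix_assoc matrix_scalar_ac)
  also have "\<dots> \<in> maxK G"
    using g Y by (intro maxK_mult maxK_adj(1)) (simp_all add: kk_iff)
  finally show "mexp (t *\<^sub>R (g ** Y ** adj g)) \<in> maxK G" .
qed

lemma adj_mexp_kk: "X \<in> kk G \<Longrightarrow> adj (mexp (t *\<^sub>R X)) = mexp (t *\<^sub>R (- X))"
  using kk_skew by (simp add: adj_mexp adj_scaleR)

text \<open>\<open>k\<close> is closed under brackets because \<open>[X, Y]\<close> is the derivative at \<open>0\<close> of the
  curve \<open>Ad\<^sub>e\<^sub>x\<^sub>p\<^sub>(\<^sub>t\<^sub>X\<^sub>) Y\<close> in \<open>k\<close>.\<close>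

lemma kk_brk:
  assumes X: "X \<in> kk G" and Y: "Y \<in> kk G"
  shows "brk X Y \<in> kk G"
proof (rule has_vector_derivative_in_closed_subspace[OF closed_kk subspace_kk _
      has_vector_derivative_mexp_conj])
  show "mexp (t *\<^sub>R X) ** Y ** mexp (t *\<^sub>R (- X)) \<in> kk G" for t
    using kk_conj[OF _ Y, of "mexp (t *\<^sub>R X)"] X by (simp add: kk_iff adj_mexp_kk)
qed

end

section \<open>The decomposition into \<open>k\<close> and \<open>i k\<close>\<close>

lemma cscale_mult_left: "cscale c A ** B = cscale c (A ** B)"
  by (simp add: cscale_def matrix_matrix_mult_def vec_eq_iff sum_distrib_left mult.assoc)

lemma cscale_mult_right: "A ** cscale c B = cscale c (A ** B)"
  by (simp add: cscale_def matrix_matrix_mult_def vec_eq_iff sum_distrib_left mult_ac)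

lemma cscale_cscale: "cscale c (cscale d A) = cscale (c * d) A"
  by (simp add: cscale_def vec_eq_iff mult.assoc)

lemma cscale_zero [simp]: "cscale c 0 = 0"
  by (simp add: cscale_def vec_eq_iff)

lemma cscale_one [simp]: "cscale 1 A = A"
  by (simp add: cscale_def vec_eq_iff)

lemma cscale_minus_one: "cscale (- 1) A = - A"
  by (simp add: cscale_def vec_eq_iff)

lemma cscale_add: "cscale c (A + B) = cscale c A + cscale c B"
  by (simp add: cscale_def vec_eq_iff algebra_simps)

lemma cscale_diff: "cscale c (A - B) = cscale c A - cscale c B"
  by (simp add: cscale_def vec_eq_iff algebra_simps)

lemma cscale_uminus: "cscale c (- A) = - cscale c A"
  by (simp add: cscale_def vec_eq_iff)

lemma cscale_scaleR: "cscale c (r *\<^sub>R A) = r *\<^sub>R cscale c A"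
  by (simp add: cscale_def vec_eq_iff scaleR_conv_of_real mult_ac)

lemma cscale_i_eq_0_iff: "cscale \<i> A = 0 \<longleftrightarrow> A = 0"
  by (simp add: cscale_def vec_eq_iff)

lemma cscale_i_i: "cscale \<i> (cscale \<i> A) = - A"
  by (simp add: cscale_cscale cscale_minus_one)

lemma brk_cscale_left: "brk (cscale c A) B = cscale c (brk A B)"
  by (simp add: brk_def cscale_diff cscale_mult_left cscale_mult_right)

lemma brk_cscale_right: "brk A (cscale c B) = cscale c (brk A B)"
  by (simp add: brk_def cscale_diff cscale_mult_left cscale_mult_right)

lemma brk_antisym: "brk A B = - brk B A"
  by (simp add: brk_def)

lemma bounded_linear_brk_left:
  fixes B :: "'n::finite cmat"
  shows "bounded_linear (\<lambda>X. brk X B)"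
proof (rule bounded_linearI')
  show "brk (X + Y) B = brk X B + brk Y B" for X Y :: "'n::finite cmat"
    by (simp add: brk_def matrix_add_rdistrib matrix_add_ldistrib)
  show "brk (c *\<^sub>R X) B = c *\<^sub>R brk X B" for c and X :: "'n::finite cmat"
    by (simp add: brk_def scalar_matrix_assoc matrix_scalar_ac scaleR_diff_right)
qed

context
  fixes G :: "'n::finite cmat set"
  assumes G: "complex_reductive G"
begin

lemma ik_iff: "x \<in> ik G \<longleftrightarrow> cscale (- \<i>) x \<in> kk G"
proof
  assume "x \<in> ik G"
  then show "cscale (- \<i>) x \<in> kk G"
    by (auto simp: ik_def cscale_cscale)
next
  assume "cscale (- \<i>) x \<in> kk G"
  then show "x \<in> ik G"
    unfolding ik_def by (rule rev_image_eqI) (simp add: cscale_cscale)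
qed

lemma cscale_i_kk: "X \<in> kk G \<Longrightarrow> cscale \<i> X \<in> ik G"
  by (simp add: ik_def)

lemma subspace_ik: "subspace (ik G)"
  using subspace_kk[OF G]
  by (simp add: subspace_def ik_iff cscale_add cscale_scaleR)

lemma ik_hermitian: "x \<in> ik G \<Longrightarrow> adj x = x"
  by (auto simp: ik_def adj_cscale kk_skew[OF G] cscale_uminus cscale_cscale
      simp flip: cscale_minus_one)

lemma kk_inter_ik:
  assumes "x \<in> kk G" and "x \<in> ik G"
  shows "x = 0"
proof -
  have "x = - x"
    using kk_skew[OF G] ik_hermitian assms by metis
  then show ?thesis
    by (metis add.right_inverse scaleR_2 scaleR_eq_0_iff zero_neq_numeral)
qed

lemma p_k_eq:
  assumes u: "u \<in> kk G" and v: "v \<in> ik G"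
  shows "p_k G (u + v) = u"
  unfolding p_k_def
proof (rule the_equality)
  fix u' assume u': "u' \<in> kk G \<and> u + v - u' \<in> ik G"
  then have "u - u' \<in> kk G"
    using subspace_diff[OF subspace_kk[OF G] u] by blast
  moreover have "u - u' = (u + v - u') - v"
    by simp
  then have "u - u' \<in> ik G"
    using u' v subspace_diff[OF subspace_ik] by metis
  ultimately show "u' = u"
    using kk_inter_ik by fastforce
qed (use u v in simp)

lemma p_ik_eq:
  assumes u: "u \<in> kk G" and v: "v \<in> ik G"
  shows "p_ik G (u + v) = v"
  unfolding p_ik_def
proof (rule the_equality)
  fix v' assume v': "v' \<in> ik G \<and> u + v - v' \<in> kk G"
  then have "v - v' \<in> ik G"
    using subspace_diff[OF subspace_ik v] by blast
  moreover have "v - v' = (u + v - v') - u"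
    by simp
  then have "v - v' \<in> kk G"
    using v' u subspace_diff[OF subspace_kk[OF G]] by metis
  ultimately show "v' = v"
    using kk_inter_ik by fastforce
qed (use u v in simp)

lemma brk_kk_ik: "X \<in> kk G \<Longrightarrow> y \<in> ik G \<Longrightarrow> brk X y \<in> ik G"
  by (auto simp: ik_def brk_cscale_right intro: kk_brk[OF G])

lemma brk_ik_kk: "y \<in> ik G \<Longrightarrow> X \<in> kk G \<Longrightarrow> brk y X \<in> ik G"
  using brk_kk_ik subspace_neg[OF subspace_ik] brk_antisym by metis

lemma brk_ik_ik: "x \<in> ik G \<Longrightarrow> y \<in> ik G \<Longrightarrow> brk x y \<in> kk G"
  using kk_brk[OF G] subspace_neg[OF subspace_kk[OF G]]
  by (auto simp: ik_def brk_cscale_left brk_cscale_right cscale_i_i)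

lemma conj_ik: "g \<in> maxK G \<Longrightarrow> x \<in> ik G \<Longrightarrow> g ** x ** adj g \<in> ik G"
  by (auto simp: ik_def cscale_mult_left cscale_mult_right intro: kk_conj[OF G])

end

section \<open>The invariant inner product on \<open>i k\<close>\<close>

lemma linear_projection_onto_subspace_exists:
  fixes V :: "'a::euclidean_space set"
  assumes V: "subspace V"
  shows "\<exists>P. linear P \<and> (\<forall>x. P x \<in> V) \<and> (\<forall>x\<in>V. P x = x)"
proof -
  obtain B where B: "B \<subseteq> V" "independent B" "V \<subseteq> span B"
    by (rule maximal_independent_subset)
  obtain C where C: "B \<subseteq> C" "C \<subseteq> UNIV" "independent C" "UNIV \<subseteq> span C"
    by (rule maximal_independent_subset_extend[OF subset_UNIV B(2)])
  from linear_independent_extend[OF C(3), of "\<lambda>x. if x \<in> B then x else 0"]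
  obtain g where g: "linear g" "\<forall>x\<in>C. g x = (if x \<in> B then x else 0)"
    by (elim exE conjE)
  have gB: "g x = id x" if "x \<in> B" for x
    using g(2) C(1) that by auto
  have "g x = x" if "x \<in> V" for x
  proof -
    have xB: "x \<in> span B" using B(3) that by (rule subsetD)
    have "g x = id x" by (rule linear_eq_on_span[OF g(1) linear_id gB xB])
    then show ?thesis by simp
  qed
  moreover have "g x \<in> V" for x
  proof -
    have xC: "x \<in> span C" using C(4) by (rule subsetD) simp
    have sub: "subspace {x. g x \<in> V}"
      using linear_subspace_vimage[OF g(1) V] by (simp add: vimage_def)
    have gC: "g y \<in> V" if "y \<in> C" for y
    proof (cases "y \<in> B")
      case True then show ?thesis using g(2) that B(1) by auto
    next
      case False then show ?thesis using g(2) that subspace_0[OF V] by auto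
    qed
    show ?thesis using span_induct[OF xC sub] gC by blast
  qed
  ultimately show ?thesis using g(1) by blast
qed

lemma bounded_bilinear_extension_exists:
  fixes V :: "'n::finite cmat set" and ip :: "'n cmat \<Rightarrow> 'n cmat \<Rightarrow> real"
  assumes V: "subspace V" and ip: "euclid_ip_on V ip"
  shows "\<exists>L. bounded_bilinear L \<and> (\<forall>x\<in>V. \<forall>y\<in>V. L x y = ip x y)"
proof -
  obtain P where P: "linear P" "\<And>x. P x \<in> V" "\<And>x. x \<in> V \<Longrightarrow> P x = x"
    using linear_projection_onto_subspace_exists[OF V] by blast
  have sym: "\<And>x y. x \<in> V \<Longrightarrow> y \<in> V \<Longrightarrow> ip x y = ip y x"
    and add: "\<And>x y z. x \<in> V \<Longrightarrow> y \<in> V \<Longrightarrow> z \<in> V \<Longrightarrow> ip (x + y) z = ip x z + ip y z"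
    and scl: "\<And>x y c. x \<in> V \<Longrightarrow> y \<in> V \<Longrightarrow> ip (c *\<^sub>R x) y = c * ip x y"
    using ip unfolding euclid_ip_on_def by blast+
  define L where "L x y = ip (P x) (P y)" for x y
  have "bilinear L"
    unfolding bilinear_def
  proof (intro conjI allI)
    fix y
    show "linear (\<lambda>x. L x y)"
      by (rule linearI) (simp_all add: L_def linear_add[OF P(1)] linear_scale[OF P(1)] add scl P(2))
  next
    fix x
    show "linear (\<lambda>y. L x y)"
    proof (rule linearI)
      fix y z
      show "L x (y + z) = L x y + L x z"
        unfolding L_def linear_add[OF P(1)]
        by (subst (1 2 3) sym) (simp_all add: P(2) add subspace_add[OF V])
    next
      fix c y
      show "L x (c *\<^sub>R y) = c *\<^sub>R L x y"
        unfolding L_def linear_scale[OF P(1)]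
        by (subst (1 2) sym) (simp_all add: P(2) scl subspace_scale[OF V])
    qed
  qed
  then have "bounded_bilinear L" by (simp add: bilinear_conv_bounded_bilinear)
  moreover have "\<forall>x\<in>V. \<forall>y\<in>V. L x y = ip x y" by (simp add: L_def P(3))
  ultimately show ?thesis by blast
qed

locale invariant_ip =
  fixes G :: "'n::finite cmat set" and ip :: "'n cmat \<Rightarrow> 'n cmat \<Rightarrow> real"
  assumes G: "complex_reductive G"
    and ip: "euclid_ip_on (ik G) ip"
    and inv: "\<forall>g\<in>maxK G. \<forall>x\<in>ik G. \<forall>y\<in>ik G.
                ip (g ** x ** matrix_inv g) (g ** y ** matrix_inv g) = ip x y"
begin

text \<open>An extension of \<open>ip\<close> to all matrices, bilinear and hence continuous, so that limits
  and derivatives can be taken inside it.\<close>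

definition ip_ext :: "'n cmat \<Rightarrow> 'n cmat \<Rightarrow> real" where
  "ip_ext = (SOME L. bounded_bilinear L \<and> (\<forall>x\<in>ik G. \<forall>y\<in>ik G. L x y = ip x y))"

lemma ip_ext: "bounded_bilinear ip_ext \<and> (\<forall>x\<in>ik G. \<forall>y\<in>ik G. ip_ext x y = ip x y)"
  unfolding ip_ext_def by (rule someI_ex[OF bounded_bilinear_extension_exists[OF subspace_ik[OF G] ip]])

sublocale ip_ext: bounded_bilinear ip_ext
  using ip_ext by blast

lemma ip_ext_eq: "x \<in> ik G \<Longrightarrow> y \<in> ik G \<Longrightarrow> ip_ext x y = ip x y"
  using ip_ext by blast

lemma ip_ext_sym: "x \<in> ik G \<Longrightarrow> y \<in> ik G \<Longrightarrow> ip_ext x y = ip_ext y x"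
  using ip by (simp add: ip_ext_eq euclid_ip_on_def)

lemma ip_pos: "x \<in> ik G \<Longrightarrow> x \<noteq> 0 \<Longrightarrow> 0 < ip x x"
  using ip by (simp add: euclid_ip_on_def)

lemma ip_ext_self_nonneg: "x \<in> ik G \<Longrightarrow> 0 \<le> ip_ext x x"
  by (cases "x = 0") (simp_all add: ip_ext.zero_left ip_ext_eq ip_pos less_imp_le)

lemma ip_ext_self_eq_0: "x \<in> ik G \<Longrightarrow> ip_ext x x = 0 \<Longrightarrow> x = 0"
  using ip_pos ip_ext_eq by fastforce

lemma ip_ext_brk_skew:
  assumes X: "X \<in> kk G" and x: "x \<in> ik G" and y: "y \<in> ik G"
  shows "ip_ext (brk X x) y + ip_ext x (brk X y) = 0"
proof -
  define c where "c z t = mexp (t *\<^sub>R X) ** z ** mexp (t *\<^sub>R (- X))" for z t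
  have "ip_ext (c x t) (c y t) = ip x y" for t
  proof -
    have g: "mexp (t *\<^sub>R X) \<in> maxK G"
      using X by (simp add: kk_iff[OF G])
    have "c z t = mexp (t *\<^sub>R X) ** z ** matrix_inv (mexp (t *\<^sub>R X))" for z
      by (simp add: c_def matrix_inv_mexp)
    moreover have "c z t \<in> ik G" if "z \<in> ik G" for z
      using conj_ik[OF G g that] by (simp add: c_def adj_mexp_kk[OF G X])
    ultimately show ?thesis
      using inv g x y by (simp add: ip_ext_eq)
  qed
  then have "((\<lambda>t. ip_ext (c x t) (c y t)) has_vector_derivative 0) (at 0)"
    by simp
  moreover have "((\<lambda>t. ip_ext (c x t) (c y t)) has_vector_derivative
                   (ip_ext (c x 0) (brk X y) + ip_ext (brk X x) (c y 0))) (at 0)"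
    unfolding c_def
    by (rule ip_ext.has_vector_derivative[OF has_vector_derivative_mexp_conj has_vector_derivative_mexp_conj])
  ultimately show ?thesis
    using vector_derivative_unique_at by (fastforce simp: c_def)
qed

end

section \<open>The differential of the exponential map at \<open>s \<in> i k\<close>\<close>

lemma summable_if_of_summable_norm:
  fixes f :: "nat \<Rightarrow> 'a::banach"
  assumes "summable (\<lambda>n. norm (f n))"
  shows "summable (\<lambda>n. if P n then f n else 0)"
  by (rule summable_comparison_test'[OF assms, where N=0]) simp

lemma sums_in_subspace:
  fixes S :: "'a::euclidean_space set"
  assumes S: "subspace S" and f: "f sums l" "\<And>n. f n \<in> S"
  shows "l \<in> S"
proof (rule Lim_in_closed_set[OF closed_subspace[OF S] _ trivial_limit_sequentially])
  show "\<forall>\<^sub>F N in sequentially. sum f {..<N} \<in> S"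
    using f(2) by (simp add: subspace_sum[OF S])
  show "(\<lambda>N. sum f {..<N}) \<longlonglongrightarrow> l"
    using f(1) by (simp add: sums_def)
qed

lemma funpow_self_adjoint:
  assumes A: "\<And>x. x \<in> V \<Longrightarrow> A x \<in> V"
    and self_adjoint: "\<And>x y. x \<in> V \<Longrightarrow> y \<in> V \<Longrightarrow> B (A x) y = B x (A y)"
    and "x \<in> V" and "y \<in> V"
  shows "B ((A ^^ i) x) y = B x ((A ^^ i) y)"
  using assms(3,4)
proof (induction i arbitrary: y)
  case (Suc i)
  have "(A ^^ i) x \<in> V"
    using \<open>x \<in> V\<close> by (induction i) (simp_all add: A)
  then have "B ((A ^^ Suc i) x) y = B ((A ^^ i) x) (A y)"
    using Suc.prems by (simp add: self_adjoint)
  also have "\<dots> = B x ((A ^^ i) (A y))"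
    using Suc by (simp add: A)
  also have "\<dots> = B x ((A ^^ Suc i) y)"
    by (simp add: funpow_Suc_right del: funpow.simps)
  finally show ?case .
qed simp

lemma funpow_form_nonneg:
  assumes A: "\<And>x. x \<in> V \<Longrightarrow> A x \<in> V"
    and self_adjoint: "\<And>x y. x \<in> V \<Longrightarrow> y \<in> V \<Longrightarrow> B (A x) y = B x (A y)"
    and B_nonneg: "\<And>x. x \<in> V \<Longrightarrow> 0 \<le> B x x"
    and A_nonneg: "\<And>x. x \<in> V \<Longrightarrow> 0 \<le> B x (A x)"
    and x: "x \<in> V"
  shows "0 \<le> B ((A ^^ i) x) ((A ^^ j) x)"
proof -
  have V: "(A ^^ n) x \<in> V" for n
    using x by (induction n) (simp_all add: A)
  have shift: "B ((A ^^ i) x) ((A ^^ j) x) = B x ((A ^^ (i + j)) x)" for i j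
    using funpow_self_adjoint[where A=A and B=B, OF A self_adjoint x V] by (simp add: funpow_add)
  obtain m where "i + j = m + m \<or> i + j = m + Suc m"
    by (metis oddE evenE mult_2 add_Suc_right Suc_eq_plus1)
  then show ?thesis
  proof
    assume "i + j = m + m"
    then have "B ((A ^^ i) x) ((A ^^ j) x) = B ((A ^^ m) x) ((A ^^ m) x)"
      using shift[of i j] shift[of m m] by simp
    with B_nonneg[OF V] show ?thesis
      by simp
  next
    assume "i + j = m + Suc m"
    then have "B ((A ^^ i) x) ((A ^^ j) x) = B ((A ^^ m) x) (A ((A ^^ m) x))"
      using shift[of i j] shift[of m "Suc m"] by simp
    with A_nonneg[OF V] show ?thesis
      by simp
  qed
qed

locale exp_differential = invariant_ip G ip for G :: "'n::finite cmat set" and ip +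
  fixes s k lam :: "'n cmat"
  assumes s: "s \<in> ik G" and k: "k \<in> kk G" and lam: "lam \<in> cscale \<i> ` zk G s"
begin

lemma lam_ik: "lam \<in> ik G" and brk_lam_s: "brk lam s = 0"
  using lam by (auto simp: zk_def cscale_i_kk[OF G] brk_cscale_left)

definition ad_pow :: "nat \<Rightarrow> 'n cmat" where
  "ad_pow n = (brk s ^^ n) k"

lemma ad_pow_Suc: "ad_pow (Suc n) = brk s (ad_pow n)"
  by (simp add: ad_pow_def)

lemma ad_pow_parity: "(even n \<longrightarrow> ad_pow n \<in> kk G) \<and> (odd n \<longrightarrow> ad_pow n \<in> ik G)"
  by (induction n) (auto simp: ad_pow_def k brk_ik_kk[OF G s] brk_ik_ik[OF G s])

lemma ad_pow_even: "even n \<Longrightarrow> ad_pow n \<in> kk G"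
  and ad_pow_odd: "odd n \<Longrightarrow> ad_pow n \<in> ik G"
  using ad_pow_parity by blast+

lemma brk_ad_pow_s: "brk (ad_pow n) s = - ad_pow (Suc n)"
  by (simp add: ad_pow_Suc brk_antisym[of _ s])

lemma brk_k_s: "brk k s = - ad_pow 1"
  using brk_ad_pow_s[of 0] by (simp add: ad_pow_def)

definition s\<^sub>0 :: "'n cmat" where
  "s\<^sub>0 = cscale (- \<i>) s"

lemma s\<^sub>0_kk: "s\<^sub>0 \<in> kk G"
  using s by (simp add: s\<^sub>0_def ik_iff[OF G])

lemma brk_s: "brk s z = cscale \<i> (brk s\<^sub>0 z)"
  by (simp add: s\<^sub>0_def brk_cscale_left cscale_cscale)

lemma ip_ext_brk_brk:
  assumes x: "x \<in> ik G" and y: "y \<in> ik G"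
  shows "ip_ext (brk s (brk s x)) y = ip_ext (brk s\<^sub>0 x) (brk s\<^sub>0 y)"
proof -
  have "brk s (brk s x) = - brk s\<^sub>0 (brk s\<^sub>0 x)"
    by (simp add: brk_s brk_cscale_right cscale_i_i)
  then show ?thesis
    using ip_ext_brk_skew[OF s\<^sub>0_kk brk_kk_ik[OF G s\<^sub>0_kk x] y] by (simp add: ip_ext.minus_left)
qed

lemma ip_ext_brk_brk_self_adjoint:
  assumes x: "x \<in> ik G" and y: "y \<in> ik G"
  shows "ip_ext (brk s (brk s x)) y = ip_ext x (brk s (brk s y))"
proof -
  have "brk s (brk s y) \<in> ik G"
    using y by (intro brk_ik_kk[OF G s] brk_ik_ik[OF G s])
  then show ?thesis
    using ip_ext_brk_brk[OF x y] ip_ext_brk_brk[OF y x] ip_ext_sym[OF x]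
      ip_ext_sym[OF brk_kk_ik[OF G s\<^sub>0_kk x] brk_kk_ik[OF G s\<^sub>0_kk y]]
    by simp
qed

lemma ip_ext_ad_pow_odd_nonneg:
  assumes "odd p" and "odd q"
  shows "0 \<le> ip_ext (ad_pow p) (ad_pow q)"
proof -
  define A where "A x = brk s (brk s x)" for x
  have odd: "ad_pow (Suc (2 * a)) = (A ^^ a) (ad_pow 1)" for a
    by (induction a) (simp_all add: A_def ad_pow_Suc)
  obtain a b where "p = Suc (2 * a)" "q = Suc (2 * b)"
    using assms by (metis oddE Suc_eq_plus1)
  moreover have "0 \<le> ip_ext ((A ^^ a) (ad_pow 1)) ((A ^^ b) (ad_pow 1))"
  proof (rule funpow_form_nonneg[where V="ik G"])
    show "A x \<in> ik G" if "x \<in> ik G" for x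
      using that by (simp add: A_def brk_ik_kk[OF G s] brk_ik_ik[OF G s])
    show "ip_ext (A x) y = ip_ext x (A y)" if "x \<in> ik G" "y \<in> ik G" for x y
      using that by (simp add: A_def ip_ext_brk_brk_self_adjoint)
    show "0 \<le> ip_ext x (A x)" if "x \<in> ik G" for x
      using that ip_ext_brk_brk_self_adjoint ip_ext_brk_brk ip_ext_self_nonneg[OF brk_kk_ik[OF G s\<^sub>0_kk]]
      by (simp add: A_def)
  qed (simp_all add: ip_ext_self_nonneg ad_pow_odd)
  ultimately show ?thesis
    by (simp add: odd)
qed

lemma ip_ext_lam_ad_pow_odd:
  assumes "odd p"
  shows "ip_ext lam (ad_pow p) = 0" and "ip_ext (ad_pow p) lam = 0"
proof -
  obtain q where q: "p = Suc q" "even q"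
    using assms by (metis oddE Suc_eq_plus1 even_mult_iff even_numeral)
  have "cscale \<i> (brk s\<^sub>0 lam) = 0"
    using brk_lam_s by (simp add: brk_s[symmetric] brk_antisym[of s])
  then have "brk s\<^sub>0 lam = 0"
    by (simp add: cscale_i_eq_0_iff)
  moreover have "ad_pow p = brk s\<^sub>0 (cscale \<i> (ad_pow q))"
    by (simp add: q ad_pow_Suc brk_s brk_cscale_right)
  ultimately show "ip_ext lam (ad_pow p) = 0"
    using ip_ext_brk_skew[OF s\<^sub>0_kk lam_ik cscale_i_kk[OF G ad_pow_even[OF q(2)]]]
    by (simp add: ip_ext.zero_left)
  then show "ip_ext (ad_pow p) lam = 0"
    using ip_ext_sym[OF lam_ik ad_pow_odd[OF assms]] by simp
qed

definition Ad_even :: "'n cmat" where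
  "Ad_even = (\<Sum>n. if even n then (1 / fact n) *\<^sub>R ad_pow n else 0)"

definition Ad_odd :: "'n cmat" where
  "Ad_odd = (\<Sum>n. if odd n then (1 / fact n) *\<^sub>R ad_pow n else 0)"

lemma sums_Ad_even: "(\<lambda>n. if even n then (1 / fact n) *\<^sub>R ad_pow n else 0) sums Ad_even"
  unfolding Ad_even_def ad_pow_def
  by (rule summable_sums[OF summable_if_of_summable_norm[OF summable_norm_brk_series]])

lemma sums_Ad_odd: "(\<lambda>n. if odd n then (1 / fact n) *\<^sub>R ad_pow n else 0) sums Ad_odd"
  unfolding Ad_odd_def ad_pow_def
  by (rule summable_sums[OF summable_if_of_summable_norm[OF summable_norm_brk_series]])

lemma Ad_even_kk: "Ad_even \<in> kk G"
  by (rule sums_in_subspace[OF subspace_kk[OF G] sums_Ad_even])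
     (simp add: ad_pow_even subspace_0[OF subspace_kk[OF G]] subspace_scale[OF subspace_kk[OF G]])

lemma Ad_odd_ik: "Ad_odd \<in> ik G"
  by (rule sums_in_subspace[OF subspace_ik[OF G] sums_Ad_odd])
     (simp add: ad_pow_odd subspace_0[OF subspace_ik[OF G]] subspace_scale[OF subspace_ik[OF G]])

lemma mexp_conj_k_eq: "mexp s ** k ** mexp (- s) = Ad_even + Ad_odd"
proof -
  have "(\<lambda>n. (if even n then (1 / fact n) *\<^sub>R ad_pow n else 0)
              + (if odd n then (1 / fact n) *\<^sub>R ad_pow n else 0)) sums (Ad_even + Ad_odd)"
    by (rule sums_add[OF sums_Ad_even sums_Ad_odd])
  moreover have "(\<lambda>n. (if even n then (1 / fact n) *\<^sub>R ad_pow n else 0)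
              + (if odd n then (1 / fact n) *\<^sub>R ad_pow n else 0)) = (\<lambda>n. (1 / fact n) *\<^sub>R ad_pow n)"
    by auto
  ultimately have "(\<lambda>n. (1 / fact n) *\<^sub>R ad_pow n) sums (Ad_even + Ad_odd)"
    by simp
  then show ?thesis
    using mexp_conj_sums_brk_series sums_unique2 unfolding ad_pow_def by blast
qed

definition sigma :: "'n cmat" where
  "sigma = frechet_derivative mexp (at s) (lam + brk k s) ** mexp (- s)"

lemma sigma_eq: "sigma = lam + (k - mexp s ** k ** matrix_inv (mexp s))"
proof -
  have "lam ** s = s ** lam"
    using brk_lam_s by (simp add: brk_def)
  then have "sigma = (lam ** mexp s + brk k (mexp s)) ** mexp (- s)"
    by (simp add: sigma_def frechet_derivative_mexp)
  also have "\<dots> = lam ** (mexp s ** mexp (- s)) + (k ** (mexp s ** mexp (- s)) - mexp s ** k ** mexp (- s))"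
    by (simp add: brk_def matrix_add_rdistrib matrix_diff_rdistrib matrix_mul_assoc)
  finally show ?thesis
    by (simp add: mexp_minus_right matrix_inv_mexp)
qed

lemma sigma_decomp: "sigma = (k - Ad_even) + (lam - Ad_odd)"
  by (simp add: sigma_eq matrix_inv_mexp mexp_conj_k_eq)

lemma p_k_sigma: "p_k G sigma = k - Ad_even"
  and p_ik_sigma: "p_ik G sigma = lam - Ad_odd"
  using p_k_eq[OF G] p_ik_eq[OF G] subspace_diff[OF subspace_kk[OF G] k Ad_even_kk]
    subspace_diff[OF subspace_ik[OF G] lam_ik Ad_odd_ik]
  by (simp_all add: sigma_decomp)

lemma sums_ip_ext_Ad_odd:
  "(\<lambda>m. if odd m then ip_ext x (ad_pow m) / fact m else 0) sums ip_ext x Ad_odd"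
proof -
  have "(\<lambda>m. ip_ext x (if odd m then (1 / fact m) *\<^sub>R ad_pow m else 0)) sums ip_ext x Ad_odd"
    by (rule bounded_linear.sums[OF ip_ext.bounded_linear_right sums_Ad_odd])
  moreover have "(\<lambda>m. ip_ext x (if odd m then (1 / fact m) *\<^sub>R ad_pow m else 0))
                   = (\<lambda>m. if odd m then ip_ext x (ad_pow m) / fact m else 0)"
    by (simp add: fun_eq_iff ip_ext.scaleR_right ip_ext.zero_right)
  ultimately show ?thesis
    by simp
qed

lemma ip_ext_ad_pow_odd_Ad_odd:
  assumes "odd p"
  shows "0 \<le> ip_ext (ad_pow p) Ad_odd"
    and "ip_ext (ad_pow p) Ad_odd = 0 \<Longrightarrow> ip_ext (ad_pow p) (ad_pow 1) = 0"
proof -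
  let ?f = "\<lambda>m. if odd m then ip_ext (ad_pow p) (ad_pow m) / fact m else 0"
  have f: "summable ?f" "ip_ext (ad_pow p) Ad_odd = suminf ?f"
    using sums_ip_ext_Ad_odd by (simp_all add: sums_iff)
  have nonneg: "0 \<le> ?f m" for m
    using assms by (simp add: ip_ext_ad_pow_odd_nonneg)
  show "0 \<le> ip_ext (ad_pow p) Ad_odd"
    unfolding f(2) by (rule suminf_nonneg[OF f(1) nonneg])
  assume "ip_ext (ad_pow p) Ad_odd = 0"
  then have "?f 1 = 0"
    using suminf_eq_zero_iff[OF f(1) nonneg] f(2) by metis
  then show "ip_ext (ad_pow p) (ad_pow 1) = 0"
    by simp
qed

lemma ip_ext_ad_pow_1_le_Ad_odd: "ip_ext (ad_pow 1) (ad_pow 1) \<le> ip_ext (ad_pow 1) Ad_odd"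
proof -
  let ?f = "\<lambda>m. if odd m then ip_ext (ad_pow 1) (ad_pow m) / fact m else 0"
  have "sum ?f {1} \<le> suminf ?f"
    using sums_ip_ext_Ad_odd by (intro sum_le_suminf) (simp_all add: sums_iff ip_ext_ad_pow_odd_nonneg)
  then show ?thesis
    using sums_ip_ext_Ad_odd[of "ad_pow 1"] by (simp add: sums_iff)
qed

lemma ip_ext_lam_Ad_odd: "ip_ext lam Ad_odd = 0"
proof -
  have "(\<lambda>m. ip_ext lam (if odd m then (1 / fact m) *\<^sub>R ad_pow m else 0)) sums ip_ext lam Ad_odd"
    by (rule bounded_linear.sums[OF ip_ext.bounded_linear_right sums_Ad_odd])
  moreover have "(\<lambda>m. ip_ext lam (if odd m then (1 / fact m) *\<^sub>R ad_pow m else 0)) = (\<lambda>m. 0)"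
    by (simp add: fun_eq_iff ip_ext.scaleR_right ip_ext.zero_right ip_ext_lam_ad_pow_odd)
  ultimately have "(\<lambda>m. 0) sums ip_ext lam Ad_odd"
    by simp
  then show ?thesis
    using sums_zero sums_unique2 by blast
qed

theorem ip_p_ik_sigma_ge: "ip (lam + brk k s) (p_ik G sigma) \<ge> ip (lam + brk k s) (lam + brk k s)"
proof -
  define w where "w = ad_pow 1"
  have w: "w \<in> ik G" and orth: "ip_ext lam w = 0" "ip_ext w lam = 0"
    using ad_pow_odd ip_ext_lam_ad_pow_odd by (simp_all add: w_def)
  have sd: "lam + brk k s = lam - w"
    by (simp add: brk_k_s w_def)
  have "ip (lam - w) (lam - Ad_odd) = ip_ext (lam - w) (lam - Ad_odd)"
    using w lam_ik Ad_odd_ik by (simp add: ip_ext_eq subspace_diff[OF subspace_ik[OF G]])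
  also have "\<dots> = ip_ext lam lam + ip_ext w Ad_odd"
    by (simp add: ip_ext.diff_left ip_ext.diff_right orth ip_ext_lam_Ad_odd)
  also have "\<dots> \<ge> ip_ext lam lam + ip_ext w w"
    using ip_ext_ad_pow_1_le_Ad_odd by (simp add: w_def)
  also have "ip_ext lam lam + ip_ext w w = ip (lam - w) (lam - w)"
    using w lam_ik
    by (simp add: ip_ext_eq[symmetric] subspace_diff[OF subspace_ik[OF G]] ip_ext.diff_left
        ip_ext.diff_right orth)
  finally show ?thesis
    by (simp add: sd p_ik_sigma)
qed

lemma brk_p_k_sigma_sums:
  "(\<lambda>n. if even n \<and> n \<noteq> 0 then (1 / fact n) *\<^sub>R ad_pow (Suc n) else 0) sums brk (p_k G sigma) s"
proof -
  interpret brk_s: bounded_linear "\<lambda>X. brk X s"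
    by (rule bounded_linear_brk_left)
  define D where "D n = (if even n then (1 / fact n) *\<^sub>R ad_pow (Suc n) else 0)" for n
  have "(\<lambda>n. brk (if even n then (1 / fact n) *\<^sub>R ad_pow n else 0) s) sums brk Ad_even s"
    by (rule brk_s.sums[OF sums_Ad_even])
  moreover have "brk (if even n then (1 / fact n) *\<^sub>R ad_pow n else 0) s = - D n" for n
    by (cases "even n") (simp_all add: D_def brk_s.scaleR brk_s.zero brk_ad_pow_s)
  ultimately have "D sums (- brk Ad_even s)"
    using sums_minus by fastforce
  then have "(\<lambda>n. D n - (if n = 0 then ad_pow 1 else 0)) sums (- brk Ad_even s - ad_pow 1)"
    by (rule sums_diff) (use sums_single[of 0 "\<lambda>_. ad_pow 1"] in simp)
  moreover have "(\<lambda>n. D n - (if n = 0 then ad_pow 1 else 0))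
                   = (\<lambda>n. if even n \<and> n \<noteq> 0 then (1 / fact n) *\<^sub>R ad_pow (Suc n) else 0)"
    by (simp add: fun_eq_iff D_def)
  moreover have "brk (p_k G sigma) s = - brk Ad_even s - ad_pow 1"
    by (simp add: p_k_sigma brk_s.diff brk_k_s)
  ultimately show ?thesis
    by simp
qed

lemma ad_pow_eq_0_from_2: "ad_pow 2 = 0 \<Longrightarrow> ad_pow (n + 2) = 0"
proof (induction n)
  case (Suc n)
  then show ?case
    by (simp only: add_Suc ad_pow_Suc) (simp add: brk_def)
qed (simp add: numeral_2_eq_2)

lemma ad_pow_2_eq_0_if_orth: "ip_ext (ad_pow 3) (ad_pow 1) = 0 \<Longrightarrow> ad_pow 2 = 0"
proof -
  have w: "ad_pow 1 \<in> ik G"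
    by (simp add: ad_pow_odd)
  assume "ip_ext (ad_pow 3) (ad_pow 1) = 0"
  then have "ip_ext (brk s\<^sub>0 (ad_pow 1)) (brk s\<^sub>0 (ad_pow 1)) = 0"
    using ip_ext_brk_brk[OF w w] by (simp add: numeral_3_eq_3 ad_pow_Suc)
  then have "brk s\<^sub>0 (ad_pow 1) = 0"
    by (rule ip_ext_self_eq_0[OF brk_kk_ik[OF G s\<^sub>0_kk w]])
  then show "ad_pow 2 = 0"
    by (simp add: numeral_2_eq_2 ad_pow_Suc brk_s)
qed

lemma sums_ip_brk_p_k_sigma:
  "(\<lambda>n. if even n \<and> n \<noteq> 0 then ip_ext (ad_pow (Suc n)) Ad_odd / fact n else 0)
     sums - ip (brk (p_k G sigma) s) (p_ik G sigma)"
proof -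
  have "(\<lambda>n. ip_ext (if even n \<and> n \<noteq> 0 then (1 / fact n) *\<^sub>R ad_pow (Suc n) else 0) (lam - Ad_odd))
          sums ip_ext (brk (p_k G sigma) s) (lam - Ad_odd)"
    by (rule bounded_linear.sums[OF ip_ext.bounded_linear_left brk_p_k_sigma_sums])
  moreover have "ip_ext (if even n \<and> n \<noteq> 0 then (1 / fact n) *\<^sub>R ad_pow (Suc n) else 0) (lam - Ad_odd)
                   = - (if even n \<and> n \<noteq> 0 then ip_ext (ad_pow (Suc n)) Ad_odd / fact n else 0)" for n
    by (simp add: ip_ext.scaleR_left ip_ext.zero_left ip_ext.diff_right ip_ext_lam_ad_pow_odd)
  moreover have "ip (brk (p_k G sigma) s) (p_ik G sigma) = ip_ext (brk (p_k G sigma) s) (lam - Ad_odd)"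
    using brk_kk_ik[OF G _ s] p_k_sigma p_ik_sigma subspace_diff[OF subspace_kk[OF G] k Ad_even_kk]
      subspace_diff[OF subspace_ik[OF G] lam_ik Ad_odd_ik]
    by (simp add: ip_ext_eq)
  ultimately show ?thesis
    using sums_minus by fastforce
qed

theorem ip_brk_p_k_sigma_nonpos:
  "ip (brk (p_k G sigma) s) (p_ik G sigma) \<le> 0"
  "ip (brk (p_k G sigma) s) (p_ik G sigma) = 0 \<longleftrightarrow> ad_pow 2 = 0"
proof -
  define g where
    "g n = (if even n \<and> n \<noteq> 0 then ip_ext (ad_pow (Suc n)) Ad_odd / fact n else 0)" for n
  have g_nonneg: "0 \<le> g n" for n
    by (simp add: g_def ip_ext_ad_pow_odd_Ad_odd)
  have g: "summable g" "ip (brk (p_k G sigma) s) (p_ik G sigma) = - suminf g"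
    using sums_ip_brk_p_k_sigma unfolding g_def[abs_def] by (simp_all add: sums_iff)
  show "ip (brk (p_k G sigma) s) (p_ik G sigma) \<le> 0"
    using suminf_nonneg[OF g(1) g_nonneg] g(2) by simp
  have "ip (brk (p_k G sigma) s) (p_ik G sigma) = 0 \<longleftrightarrow> (\<forall>n. g n = 0)"
    using suminf_eq_zero_iff[OF g(1) g_nonneg] g(2) by simp
  also have "\<dots> \<longleftrightarrow> ad_pow 2 = 0"
  proof
    assume "\<forall>n. g n = 0"
    then have "ip_ext (ad_pow 3) Ad_odd = 0"
      by (drule_tac x=2 in spec) (simp add: g_def numeral_3_eq_3 numeral_2_eq_2)
    then show "ad_pow 2 = 0"
      using ip_ext_ad_pow_odd_Ad_odd(2)[of 3] ad_pow_2_eq_0_if_orth by simp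
  next
    assume "ad_pow 2 = 0"
    then have "ad_pow (Suc n) = 0" if "n \<noteq> 0" "even n" for n
      using ad_pow_eq_0_from_2[of "n - 1"] that by (simp add: numeral_2_eq_2)
    then show "\<forall>n. g n = 0"
      by (simp add: g_def ip_ext.zero_left)
  qed
  finally show "ip (brk (p_k G sigma) s) (p_ik G sigma) = 0 \<longleftrightarrow> ad_pow 2 = 0" .
qed

lemma lam_plus_brk_in_i_zk_iff: "lam + brk k s \<in> cscale \<i> ` zk G s \<longleftrightarrow> ad_pow 2 = 0"
proof -
  interpret brk_s: bounded_linear "\<lambda>X. brk X s"
    by (rule bounded_linear_brk_left)
  have "brk (lam + brk k s) s = ad_pow 2"
    by (simp add: brk_s.add brk_s.diff brk_lam_s brk_k_s brk_ad_pow_s numeral_2_eq_2)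
  moreover have "lam + brk k s \<in> ik G"
    using subspace_add[OF subspace_ik[OF G] lam_ik brk_kk_ik[OF G k s]] .
  ultimately show ?thesis
    by (auto simp: zk_def ik_iff[OF G] brk_cscale_left cscale_cscale image_iff
        intro!: exI[of _ "cscale (- \<i>) (lam + brk k s)"])
qed

end

theorem propositionA:
  fixes G :: "'n::finite cmat set"
    and ip :: "'n cmat \<Rightarrow> 'n cmat \<Rightarrow> real"
    and s sd lam k :: "'n cmat"
  assumes G: "complex_reductive G"
    and ip: "euclid_ip_on (ik G) ip"
    and inv: "\<forall>g\<in>maxK G. \<forall>x\<in>ik G. \<forall>y\<in>ik G.
                ip (g ** x ** matrix_inv g) (g ** y ** matrix_inv g) = ip x y"
    and s: "s \<in> ik G" and sd: "sd \<in> ik G"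
    and lam: "lam \<in> cscale \<i> ` zk G s"
    and k: "k \<in> zk_perp G ip s"
    and dec: "sd = lam + brk k s"
  shows "let \<sigma> = frechet_derivative mexp (at s) sd ** mexp (- s) in
           \<sigma> = lam + (k - mexp s ** k ** matrix_inv (mexp s))
         \<and> ip sd (p_ik G \<sigma>) \<ge> ip sd sd
         \<and> ip (brk (p_k G \<sigma>) s) (p_ik G \<sigma>) \<le> 0
         \<and> (ip (brk (p_k G \<sigma>) s) (p_ik G \<sigma>) = 0 \<longleftrightarrow> sd \<in> cscale \<i> ` zk G s)"
proof -
  \<comment> \<open>\<open>sd \<in> i k\<close> follows from the other hypotheses, and of \<open>k \<in> z\<^sub>k(s)\<^sup>\<bottom>\<close> only \<open>k \<in> k\<close> is used.\<close>
  have "k \<in> kk G"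
    using k by (simp add: zk_perp_def)
  then interpret exp_differential G ip s k lam
    using G ip inv s lam by unfold_locales
  have "frechet_derivative mexp (at s) sd ** mexp (- s) = sigma"
    by (simp add: sigma_def dec)
  then show ?thesis
    using sigma_eq ip_p_ik_sigma_ge ip_brk_p_k_sigma_nonpos lam_plus_brk_in_i_zk_iff
    by (simp add: Let_def dec)
qed

end
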